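(* Let $\mathbf{uGraph}$ be the category of finite undirected multigraphs and let $\mathcal M$ be the class of its component-wise monic morphisms. Then $(\mathbf{uGraph},\mathcal M)$ is a finitary $\mathcal M$-adhesive category with an $\mathcal M$-initial object, $\mathcal M$-effective unions and an epi-$\mathcal M$-factorization; moreover all final pullback complements (FPCs) of composable pairs of $\mathcal M$-morphisms exist in $\mathbf{uGraph}$, and $\mathcal M$-morphisms are stable under FPCs. (That is, $\mathbf{uGraph}$ satisfies the standing assumptions required both for Double-Pushout (DPO) and for Sesqui-Pushout (SqPO) rewriting.)
   Context: Let $\mathcal P^{(1,2)}:\mathbf{Set}\to\mathbf{Set}$ send a set $S$ to the set of its subsets $P\subseteq S$ with $1\le |P|\le 2$ (and a map to its direct-image map). An object of $\mathbf{uGraph}$ is a triple $G=(E_G,V_G,i_G)$ of finite sets $E_G$ (edges), $V_G$ (vertices) and a map $i_G:E_G\to\mathcal P^{(1,2)}(V_G)$; a morphism $G\to H$ is a pair $(\varphi_E:E_G\to E_H,\varphi_V:V_G\to V_H)$ with $i_H\circ\varphi_E=\mathcal P^{(1,2)}(\varphi_V)\circ i_G$ (i.e. $\mathbf{uGraph}$ is the finitary restriction of the comma category $(\mathrm{Id}_{\mathbf{Set}},\mathcal P^{(1,2)})$). $\mathcal M$ is the class of morphisms whose two components are injective. Terminology: $(\mathbf C,\mathcal M)$ is $\mathcal M$-adhesive if pushouts and pullbacks along $\mathcal M$-morphisms exist, $\mathcal M$ contains all isomorphisms and is stable under pushout, pullback and composition, and pushouts along $\mathcal M$-morphisms are $\mathcal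 M$-van Kampen squares; finitary means every object has finitely many $\mathcal M$-subobjects up to isomorphism; an $\mathcal M$-initial object $\varnothing$ admits a unique $\mathcal M$-morphism $\varnothing\hookrightarrow X$ to every object $X$; $\mathcal M$-effective unions means: if a cospan $(B\hookrightarrow D\hookleftarrow C)$ of $\mathcal M$-morphisms is the pushout of a span $(B\hookleftarrow A\hookrightarrow C)$, then for every cospan $(B\hookrightarrow E\hookleftarrow C)$ of $\mathcal M$-morphisms whose pullback is $(B\hookleftarrow A\hookrightarrow C)$, the induced morphism $D\to E$ is in $\mathcal M$; an epi-$\mathcal M$-factorization means every morphism factors as $m\circ e$ with $e$ epi and $m\in\mathcal M$, uniquely up to isomorphism. For composable $a:A\to B$, $b:B\to D$, a pair $(c:C\to D,d:A\to C)$ is a final pullback complement (FPC) if $(a,d)$ is a pullback of $(b,c)$ and for every pullback $(a\circ p,q)$ of $(b,r)$ (with $r:C'\to D$) there is a morphism $s$ with $r=c\circ s$, unique up to isomorphism; $\mathcal M$ is stable under FPCs if the FPC of a composable pair of $\mathcal M$-morphisms (when it exists) consists of $\mathcal M$-morphisms. *)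

theory Defs
  imports "HOL-Library.FuncSet"
begin

text \<open>Edges and vertices are
  drawn from nat (every finite multigraph is isomorphic to one of these, so this
  full subcategory is equivalent to uGraph). A graph is a triple (E, V, i) with
  i : E -> P^(1,2)(V); functions are kept extensional (undefined outside the
  carriers) so that HOL equality is the categorical equality of morphisms.\<close>

type_synonym ugraph = "nat set \<times> nat set \<times> (nat \<Rightarrow> nat set)"
type_synonym umor = "(nat \<Rightarrow> nat) \<times> (nat \<Rightarrow> nat)"

definition gE :: "ugraph \<Rightarrow> nat set" where "gE G = fst G"
definition gV :: "ugraph \<Rightarrow> nat set" where "gV G = fst (snd G)"
definition gi :: "ugraph \<Rightarrow> nat \<Rightarrow> nat set" where "gi G = snd (snd G)"

definition P12 :: "'a set \<Rightarrow> 'a set set" where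
  "P12 S = {P. P \<subseteq> S \<and> 1 \<le> card P \<and> card P \<le> 2}"

definition ug :: "ugraph \<Rightarrow> bool" where
  "ug G \<longleftrightarrow> finite (gE G) \<and> finite (gV G) \<and> gi G \<in> gE G \<rightarrow>\<^sub>E P12 (gV G)"

definition hom :: "ugraph \<Rightarrow> ugraph \<Rightarrow> umor set" where
  "hom G H = {(fE, fV). ug G \<and> ug H \<and> fE \<in> gE G \<rightarrow>\<^sub>E gE H \<and> fV \<in> gV G \<rightarrow>\<^sub>E gV H \<and>
      (\<forall>e\<in>gE G. gi H (fE e) = fV ` gi G e)}"

definition cmp :: "ugraph \<Rightarrow> umor \<Rightarrow> umor \<Rightarrow> umor" where
  "cmp G g f = (restrict (fst g \<circ> fst f) (gE G), restrict (snd g \<circ> snd f) (gV G))"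

definition idm :: "ugraph \<Rightarrow> umor" where
  "idm G = (restrict id (gE G), restrict id (gV G))"

definition Mm :: "ugraph \<Rightarrow> ugraph \<Rightarrow> umor \<Rightarrow> bool" where
  "Mm G H f \<longleftrightarrow> f \<in> hom G H \<and> inj_on (fst f) (gE G) \<and> inj_on (snd f) (gV G)"

definition iso :: "ugraph \<Rightarrow> ugraph \<Rightarrow> umor \<Rightarrow> bool" where
  "iso G H f \<longleftrightarrow> f \<in> hom G H \<and> (\<exists>g\<in>hom H G. cmp G g f = idm G \<and> cmp H f g = idm H)"

definition epi :: "ugraph \<Rightarrow> ugraph \<Rightarrow> umor \<Rightarrow> bool" where
  "epi G H e \<longleftrightarrow> e \<in> hom G H \<and>
     (\<forall>K. \<forall>a\<in>hom H K. \<forall>b\<in>hom H K. cmp G a e = cmp G b e \<longrightarrow> a = b)"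

definition comm_sq :: "ugraph \<Rightarrow> ugraph \<Rightarrow> ugraph \<Rightarrow> ugraph \<Rightarrow> umor \<Rightarrow> umor \<Rightarrow> umor \<Rightarrow> umor \<Rightarrow> bool" where
  "comm_sq A B C D f g h k \<longleftrightarrow> f \<in> hom A B \<and> g \<in> hom A C \<and> h \<in> hom B D \<and> k \<in> hom C D \<and>
     cmp A h f = cmp A k g"

definition pushout :: "ugraph \<Rightarrow> ugraph \<Rightarrow> ugraph \<Rightarrow> ugraph \<Rightarrow> umor \<Rightarrow> umor \<Rightarrow> umor \<Rightarrow> umor \<Rightarrow> bool" where
  "pushout A B C D f g h k \<longleftrightarrow> comm_sq A B C D f g h k \<and>
     (\<forall>X x y. x \<in> hom B X \<longrightarrow> y \<in> hom C X \<longrightarrow> cmp A x f = cmp A y g \<longrightarrow>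
        (\<exists>!u. u \<in> hom D X \<and> cmp B u h = x \<and> cmp C u k = y))"

definition pullback :: "ugraph \<Rightarrow> ugraph \<Rightarrow> ugraph \<Rightarrow> ugraph \<Rightarrow> umor \<Rightarrow> umor \<Rightarrow> umor \<Rightarrow> umor \<Rightarrow> bool" where
  "pullback A B C D f g h k \<longleftrightarrow> comm_sq A B C D f g h k \<and>
     (\<forall>X x y. x \<in> hom X B \<longrightarrow> y \<in> hom X C \<longrightarrow> cmp X h x = cmp X k y \<longrightarrow>
        (\<exists>!u. u \<in> hom X A \<and> cmp X f u = x \<and> cmp X g u = y))"

definition M_VK :: "ugraph \<Rightarrow> ugraph \<Rightarrow> ugraph \<Rightarrow> ugraph \<Rightarrow> umor \<Rightarrow> umor \<Rightarrow> umor \<Rightarrow> umor \<Rightarrow> bool" where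
  "M_VK A B C D f g h k \<longleftrightarrow>
     (\<forall>A' B' C' D' f' g' h' k' a b c d.
        comm_sq A' B' C' D' f' g' h' k' \<and> a \<in> hom A' A \<and> Mm B' B b \<and> Mm C' C c \<and> Mm D' D d \<and>
        cmp A' b f' = cmp A' f a \<and> cmp A' c g' = cmp A' g a \<and>
        cmp B' d h' = cmp B' h b \<and> cmp C' d k' = cmp C' k c \<and>
        pullback A' B' A B f' a b f \<and> pullback A' C' A C g' a c g \<longrightarrow>
        (pushout A' B' C' D' f' g' h' k' \<longleftrightarrow>
           pullback B' D' B D h' b d h \<and> pullback C' D' C D k' c d k))"

definition M_adhesive :: bool where
  "M_adhesive \<longleftrightarrow>
     (\<forall>A B C f g. Mm A B f \<and> g \<in> hom A C \<longrightarrow> (\<exists>D h k. pushout A B C D f g h k)) \<and>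
     (\<forall>B C D h k. h \<in> hom B D \<and> Mm C D k \<longrightarrow> (\<exists>A f g. pullback A B C D f g h k)) \<and>
     (\<forall>A B f. iso A B f \<longrightarrow> Mm A B f) \<and>
     (\<forall>A B C f g. Mm A B f \<and> Mm B C g \<longrightarrow> Mm A C (cmp A g f)) \<and>
     (\<forall>A B C D f g h k. pushout A B C D f g h k \<and> Mm A B f \<longrightarrow> Mm C D k) \<and>
     (\<forall>A B C D f g h k. pullback A B C D f g h k \<and> Mm C D k \<longrightarrow> Mm A B f) \<and>
     (\<forall>A B C D f g h k. pushout A B C D f g h k \<and> Mm A B f \<longrightarrow> M_VK A B C D f g h k)"

definition finitary :: bool where
  "finitary \<longleftrightarrow> (\<forall>X. ug X \<longrightarrow>
     (\<exists>S. finite S \<and> (\<forall>(Y, m)\<in>S. Mm Y X m) \<and>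
        (\<forall>Y m. Mm Y X m \<longrightarrow> (\<exists>(Y', m')\<in>S. \<exists>i. iso Y Y' i \<and> cmp Y m' i = m))))"

definition M_initial :: bool where
  "M_initial \<longleftrightarrow> (\<exists>I. ug I \<and> (\<forall>X. ug X \<longrightarrow> (\<exists>!m. Mm I X m)))"

definition M_effective_unions :: bool where
  "M_effective_unions \<longleftrightarrow>
     (\<forall>A B C D E m1 m2 n1 n2 e1 e2 u.
        Mm A B m1 \<and> Mm A C m2 \<and> Mm B D n1 \<and> Mm C D n2 \<and> pushout A B C D m1 m2 n1 n2 \<and>
        Mm B E e1 \<and> Mm C E e2 \<and> pullback A B C E m1 m2 e1 e2 \<and>
        u \<in> hom D E \<and> cmp B u n1 = e1 \<and> cmp C u n2 = e2 \<longrightarrow> Mm D E u)"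

definition epi_M_factorization :: bool where
  "epi_M_factorization \<longleftrightarrow> (\<forall>A B f. f \<in> hom A B \<longrightarrow>
     (\<exists>K e m. epi A K e \<and> Mm K B m \<and> cmp A m e = f) \<and>
     (\<forall>K e m K' e' m'. epi A K e \<and> Mm K B m \<and> cmp A m e = f \<and>
         epi A K' e' \<and> Mm K' B m' \<and> cmp A m' e' = f \<longrightarrow>
         (\<exists>i. iso K K' i \<and> cmp A i e = e' \<and> cmp K m' i = m)))"

definition FPC :: "ugraph \<Rightarrow> ugraph \<Rightarrow> ugraph \<Rightarrow> ugraph \<Rightarrow> umor \<Rightarrow> umor \<Rightarrow> umor \<Rightarrow> umor \<Rightarrow> bool" where
  "FPC A B C D a b c d \<longleftrightarrow> pullback A B C D a d b c \<and>
     (\<forall>A' C' p q r. p \<in> hom A' A \<and> r \<in> hom C' D \<and> pullback A' B C' D (cmp A' a p) q b r \<longrightarrow>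
        (\<exists>!s. s \<in> hom C' C \<and> cmp C' c s = r \<and> cmp A' s q = cmp A' d p))"

definition FPCs_of_M_exist :: bool where
  "FPCs_of_M_exist \<longleftrightarrow> (\<forall>A B D a b. Mm A B a \<and> Mm B D b \<longrightarrow> (\<exists>C c d. FPC A B C D a b c d))"

definition M_stable_under_FPC :: bool where
  "M_stable_under_FPC \<longleftrightarrow> (\<forall>A B C D a b c d. Mm A B a \<and> Mm B D b \<and> FPC A B C D a b c d \<longrightarrow>
     Mm C D c \<and> Mm A C d)"

end

theory Submission
  imports Defs
begin

text \<open>Pushouts and pullbacks along component-wise injective morphisms are computed in
  \<open>uGraph\<close> as in \<open>Set\<close>, separately on edges and on vertices; the incidence of an edge is
  transported along the injective leg. A commuting square with injective top \<open>f\<close> is a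
  pushout iff both component squares exhibit \<open>D\<close> as the disjoint union of \<open>C\<close> and
  \<open>B - f ` A\<close>, and a square with injective bottom \<open>k\<close> is a pullback iff \<open>f\<close> is, in both
  components, an injection onto the preimage of \<open>k ` C\<close>. The \<open>\<M>\<close>-adhesivity axioms and
  effective unions thereby become elementary facts about sets. Subobjects are subgraphs and
  epimorphisms are the component-wise surjections, so epi-\<open>\<M>\<close> factorisations are image
  factorisations; the final pullback complement of \<open>A \<rightarrow> B \<rightarrow> D\<close> deletes from \<open>D\<close> the image
  of \<open>B - a ` A\<close> together with every edge that loses an endpoint.\<close>

section \<open>Graph morphisms and subgraphs\<close>

lemma graph_sel [simp]: "gE (E, V, i) = E" "gV (E, V, i) = V" "gi (E, V, i) = i"
  by (simp_all add: gE_def gV_def gi_def)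

lemma P12_mono: "S \<in> P12 X \<Longrightarrow> S \<subseteq> Y \<Longrightarrow> S \<in> P12 Y"
  unfolding P12_def by auto

lemma P12_image:
  assumes "S \<in> P12 X" "f ` S \<subseteq> Y"
  shows "f ` S \<in> P12 Y"
proof -
  have "finite S" "S \<noteq> {}" "card S \<le> 2"
    using assms(1) unfolding P12_def by (auto intro: card_ge_0_finite)
  then have "1 \<le> card (f ` S)" "card (f ` S) \<le> 2"
    using card_image_le[of S f] by (auto simp: Suc_le_eq card_gt_0_iff)
  with assms(2) show ?thesis
    unfolding P12_def by auto
qed

lemma ugD:
  assumes "ug G"
  shows "finite (gE G)" "finite (gV G)" "gi G \<in> extensional (gE G)"
    "\<And>e. e \<in> gE G \<Longrightarrow> gi G e \<in> P12 (gV G)"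
    "\<And>e. e \<in> gE G \<Longrightarrow> gi G e \<subseteq> gV G"
    "\<And>e. e \<in> gE G \<Longrightarrow> gi G e \<noteq> {}"
proof -
  show "finite (gE G)" "finite (gV G)" "gi G \<in> extensional (gE G)"
    using assms unfolding ug_def by (auto simp: PiE_def)
  fix e assume "e \<in> gE G"
  then show "gi G e \<in> P12 (gV G)"
    using assms unfolding ug_def by auto
  then show "gi G e \<subseteq> gV G" "gi G e \<noteq> {}"
    unfolding P12_def by auto
qed

lemma ugI:
  assumes "finite (gE G)" "finite (gV G)" "gi G \<in> extensional (gE G)"
    "\<And>e. e \<in> gE G \<Longrightarrow> gi G e \<in> P12 (gV G)"
  shows "ug G"
  using assms unfolding ug_def by (auto simp: PiE_def)

lemma hom_iff:
  "f \<in> hom G H \<longleftrightarrow> ug G \<and> ug H \<and> fst f \<in> gE G \<rightarrow>\<^sub>E gE H \<and> snd f \<in> gV G \<rightarrow>\<^sub>E gV H \<and>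
     (\<forall>e\<in>gE G. gi H (fst f e) = snd f ` gi G e)"
  by (cases f) (simp add: hom_def)

lemma homD:
  assumes "f \<in> hom G H"
  shows "ug G" "ug H" "fst f \<in> gE G \<rightarrow>\<^sub>E gE H" "snd f \<in> gV G \<rightarrow>\<^sub>E gV H"
    "\<And>e. e \<in> gE G \<Longrightarrow> gi H (fst f e) = snd f ` gi G e"
    "fst f ` gE G \<subseteq> gE H" "snd f ` gV G \<subseteq> gV H"
  using assms unfolding hom_iff by auto

lemma hom_eqI:
  assumes "f \<in> hom G H" "g \<in> hom G H'"
    "\<And>e. e \<in> gE G \<Longrightarrow> fst f e = fst g e" "\<And>v. v \<in> gV G \<Longrightarrow> snd f v = snd g v"
  shows "f = g"
proof -
  have "fst f = fst g" "snd f = snd g"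
    using assms homD(3,4)[OF assms(1)] homD(3,4)[OF assms(2)]
    by (auto intro!: extensionalityI simp: PiE_def)
  then show ?thesis
    by (simp add: prod_eq_iff)
qed

lemma cmp_fst [simp]: "fst (cmp G g f) = restrict (fst g \<circ> fst f) (gE G)"
  and cmp_snd [simp]: "snd (cmp G g f) = restrict (snd g \<circ> snd f) (gV G)"
  by (simp_all add: cmp_def)

lemma idm_fst [simp]: "fst (idm G) = restrict id (gE G)"
  and idm_snd [simp]: "snd (idm G) = restrict id (gV G)"
  by (simp_all add: idm_def)

lemma cmp_eq_iff:
  "cmp G g f = cmp G g' f' \<longleftrightarrow>
     (\<forall>x\<in>gE G. fst g (fst f x) = fst g' (fst f' x)) \<and> (\<forall>x\<in>gV G. snd g (snd f x) = snd g' (snd f' x))"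
  by (auto simp: cmp_def fun_eq_iff)

lemma cmp_eqD:
  assumes "cmp G g f = cmp G g' f'"
  shows "\<And>x. x \<in> gE G \<Longrightarrow> fst g (fst f x) = fst g' (fst f' x)"
    "\<And>x. x \<in> gV G \<Longrightarrow> snd g (snd f x) = snd g' (snd f' x)"
  using assms unfolding cmp_eq_iff by auto

lemma cmp_eq_hom_iff:
  assumes "f \<in> hom A B" "x \<in> hom A X"
  shows "cmp A u f = x \<longleftrightarrow> (\<forall>e\<in>gE A. fst u (fst f e) = fst x e) \<and> (\<forall>v\<in>gV A. snd u (snd f v) = snd x v)"
proof
  assume "(\<forall>e\<in>gE A. fst u (fst f e) = fst x e) \<and> (\<forall>v\<in>gV A. snd u (snd f v) = snd x v)"
  with homD(3,4)[OF assms(2)] have "fst (cmp A u f) = fst x" "snd (cmp A u f) = snd x"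
    by (auto intro: extensionalityI[of _ "gE A"] extensionalityI[of _ "gV A"] simp: PiE_def)
  then show "cmp A u f = x"
    by (simp add: prod_eq_iff)
qed auto

lemma cmp_hom:
  assumes f: "f \<in> hom A B" and g: "g \<in> hom B C"
  shows "cmp A g f \<in> hom A C"
proof -
  have "gi C (fst (cmp A g f) e) = snd (cmp A g f) ` gi A e" if "e \<in> gE A" for e
    using that homD[OF f] homD[OF g] ugD(5)[OF homD(1)[OF f] that]
    by (auto simp: image_image image_subset_iff intro!: image_cong)
  then show ?thesis
    using homD[OF f] homD[OF g] unfolding hom_iff by (auto simp: PiE_def Pi_def)
qed

lemma idm_hom: "ug G \<Longrightarrow> idm G \<in> hom G G"
  unfolding hom_iff by (auto simp: PiE_def Pi_def dest: ugD(5))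

lemma cmp_idm_right: "f \<in> hom A B \<Longrightarrow> cmp A f (idm A) = f"
  by (rule hom_eqI[OF cmp_hom[OF idm_hom[OF homD(1)]]]) auto

lemma cmp_idm_left: "f \<in> hom A B \<Longrightarrow> cmp A (idm B) f = f"
  by (rule hom_eqI[OF cmp_hom[OF _ idm_hom[OF homD(2)]]]) (auto dest: homD)

lemma cmp_assoc: "f \<in> hom A B \<Longrightarrow> cmp A h (cmp A g f) = cmp A (cmp B h g) f"
  by (auto simp: cmp_def fun_eq_iff dest: homD)

lemma cmp_eq_idm_iff:
  "cmp G g f = idm G \<longleftrightarrow> (\<forall>x\<in>gE G. fst g (fst f x) = x) \<and> (\<forall>x\<in>gV G. snd g (snd f x) = x)"
  by (auto simp: cmp_def idm_def prod_eq_iff restrict_def fun_eq_iff)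

lemma MmD: "Mm G H f \<Longrightarrow> f \<in> hom G H" "Mm G H f \<Longrightarrow> inj_on (fst f) (gE G)"
  "Mm G H f \<Longrightarrow> inj_on (snd f) (gV G)"
  by (simp_all add: Mm_def)

lemma Mm_cmp:
  assumes "Mm A B f" "Mm B C g"
  shows "Mm A C (cmp A g f)"
proof -
  have "inj_on (fst g \<circ> fst f) (gE A)" "inj_on (snd g \<circ> snd f) (gV A)"
    using assms homD(6,7)[OF MmD(1)[OF assms(1)]]
    by (auto simp: Mm_def intro: comp_inj_on inj_on_subset)
  then show ?thesis
    using cmp_hom[OF MmD(1)[OF assms(1)] MmD(1)[OF assms(2)]] unfolding Mm_def by simp
qed

lemma Mm_cancel:
  assumes f: "Mm A B f" and u: "u \<in> hom X A" "u' \<in> hom X A" and eq: "cmp X f u = cmp X f u'"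
  shows "u = u'"
proof (rule hom_eqI[OF u])
  show "fst u e = fst u' e" if "e \<in> gE X" for e
    using inj_onD[OF MmD(2)[OF f] cmp_eqD(1)[OF eq that]] homD(6)[OF u(1)] homD(6)[OF u(2)] that by blast
  show "snd u v = snd u' v" if "v \<in> gV X" for v
    using inj_onD[OF MmD(3)[OF f] cmp_eqD(2)[OF eq that]] homD(7)[OF u(1)] homD(7)[OF u(2)] that by blast
qed

lemma iso_iff_bij:
  assumes f: "f \<in> hom G H"
  shows "iso G H f \<longleftrightarrow> bij_betw (fst f) (gE G) (gE H) \<and> bij_betw (snd f) (gV G) (gV H)"
proof
  assume "iso G H f"
  then obtain g where g: "g \<in> hom H G" "cmp G g f = idm G" "cmp H f g = idm H"
    unfolding iso_def by blast
  from g(2,3) have "\<forall>x\<in>gE G. fst g (fst f x) = x" "\<forall>x\<in>gE H. fst f (fst g x) = x"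
    "\<forall>x\<in>gV G. snd g (snd f x) = x" "\<forall>x\<in>gV H. snd f (snd g x) = x"
    unfolding cmp_eq_idm_iff by auto
  then show "bij_betw (fst f) (gE G) (gE H) \<and> bij_betw (snd f) (gV G) (gV H)"
    using homD(6,7)[OF f] homD(6,7)[OF g(1)] by (auto intro!: bij_betw_byWitness)
next
  assume bij: "bij_betw (fst f) (gE G) (gE H) \<and> bij_betw (snd f) (gV G) (gV H)"
  define g where "g = (restrict (inv_into (gE G) (fst f)) (gE H), restrict (inv_into (gV G) (snd f)) (gV H))"
  have gE: "\<forall>x\<in>gE G. fst g (fst f x) = x" "\<forall>y\<in>gE H. fst f (fst g y) = y" "fst g ` gE H \<subseteq> gE G"
    and gV: "\<forall>x\<in>gV G. snd g (snd f x) = x" "\<forall>y\<in>gV H. snd f (snd g y) = y" "snd g ` gV H \<subseteq> gV G"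
    using bij homD(6,7)[OF f]
    by (auto simp: g_def bij_betw_def f_inv_into_f inv_into_into)
  have "gi G (fst g e) = snd g ` gi H e" if e: "e \<in> gE H" for e
  proof -
    have ge: "fst g e \<in> gE G" "fst f (fst g e) = e"
      using e gE by auto
    have "snd g ` gi H e = snd g ` snd f ` gi G (fst g e)"
      using homD(5)[OF f ge(1)] ge(2) by simp
    also have "\<dots> = gi G (fst g e)"
      using gV(1) ugD(5)[OF homD(1)[OF f] ge(1)] by (force simp: image_image)
    finally show ?thesis ..
  qed
  then have g_hom: "g \<in> hom H G"
    using homD(1,2)[OF f] gE(3) gV(3) unfolding hom_iff by (auto simp: g_def PiE_def)
  have "cmp G g f = idm G" "cmp H f g = idm H"
    using gE gV by (auto simp: cmp_def idm_def fun_eq_iff)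
  with f g_hom show "iso G H f"
    unfolding iso_def by blast
qed

lemma iso_Mm: "iso A B f \<Longrightarrow> Mm A B f"
  using iso_iff_bij[of f A B] unfolding iso_def Mm_def by (auto dest: bij_betw_imp_inj_on)

definition subgraph_carriers :: "ugraph \<Rightarrow> nat set \<Rightarrow> nat set \<Rightarrow> bool" where
  "subgraph_carriers X E V \<longleftrightarrow> E \<subseteq> gE X \<and> V \<subseteq> gV X \<and> (\<forall>e\<in>E. gi X e \<subseteq> V)"

definition subgraph :: "ugraph \<Rightarrow> nat set \<Rightarrow> nat set \<Rightarrow> ugraph" where
  "subgraph X E V = (E, V, restrict (gi X) E)"

definition inclusion :: "nat set \<Rightarrow> nat set \<Rightarrow> umor" where
  "inclusion E V = (restrict id E, restrict id V)"

lemma ug_subgraph: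
  assumes "ug X" "subgraph_carriers X E V"
  shows "ug (subgraph X E V)"
proof (rule ugI)
  show "finite (gE (subgraph X E V))" "finite (gV (subgraph X E V))"
    using assms ugD(1,2)[OF assms(1)] by (auto simp: subgraph_def subgraph_carriers_def intro: finite_subset)
  show "gi (subgraph X E V) e \<in> P12 (gV (subgraph X E V))" if "e \<in> gE (subgraph X E V)" for e
    using that assms P12_mono[OF ugD(4)[OF assms(1)]] by (auto simp: subgraph_def subgraph_carriers_def)
qed (simp add: subgraph_def)

lemma hom_into_subgraph:
  assumes x: "x \<in> hom Y X" and sub: "subgraph_carriers X E V"
    and "fst x ` gE Y \<subseteq> E" "snd x ` gV Y \<subseteq> V"
  shows "x \<in> hom Y (subgraph X E V)"
  unfolding hom_iff
proof (intro conjI ballI)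
  fix e assume "e \<in> gE Y"
  then show "gi (subgraph X E V) (fst x e) = snd x ` gi Y e"
    using homD(5)[OF x] assms(3) by (auto simp: subgraph_def)
qed (use homD[OF x] ug_subgraph[OF homD(2)[OF x] sub] assms(3,4) in \<open>auto simp: subgraph_def PiE_def Pi_def\<close>)

lemma Mm_inclusion:
  assumes "ug X" "subgraph_carriers X E V"
  shows "Mm (subgraph X E V) X (inclusion E V)"
proof -
  have "inclusion E V \<in> hom (subgraph X E V) X"
    unfolding hom_iff
  proof (intro conjI ballI)
    fix e assume "e \<in> gE (subgraph X E V)"
    then show "gi X (fst (inclusion E V) e) = snd (inclusion E V) ` gi (subgraph X E V) e"
      using assms(2) by (force simp: inclusion_def subgraph_def subgraph_carriers_def)
  qed (use ug_subgraph[OF assms] assms in \<open>auto simp: inclusion_def subgraph_def subgraph_carriers_def PiE_def Pi_def\<close>)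
  then show ?thesis
    unfolding Mm_def by (simp add: inclusion_def subgraph_def)
qed

lemma cmp_inclusion:
  assumes "x \<in> hom Y X" "fst x ` gE Y \<subseteq> E" "snd x ` gV Y \<subseteq> V"
  shows "cmp Y (inclusion E V) x = x"
  using assms by (subst cmp_eq_hom_iff[OF assms(1,1)]) (auto simp: inclusion_def)

lemma image_subgraph_carriers:
  assumes f: "f \<in> hom A B"
  shows "subgraph_carriers B (fst f ` gE A) (snd f ` gV A)"
  using homD[OF f] ugD(5)[OF homD(1)[OF f]] unfolding subgraph_carriers_def by blast

section \<open>Pushouts along \<open>\<M>\<close>-morphisms\<close>

definition set_pushout ::
  "'a set \<Rightarrow> 'b set \<Rightarrow> 'c set \<Rightarrow> 'd set \<Rightarrow> ('a \<Rightarrow> 'b) \<Rightarrow> ('b \<Rightarrow> 'd) \<Rightarrow> ('c \<Rightarrow> 'd) \<Rightarrow> bool" where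
  "set_pushout A B C D f h k \<longleftrightarrow>
     inj_on k C \<and> inj_on h (B - f ` A) \<and> h ` (B - f ` A) \<inter> k ` C = {} \<and> h ` B \<union> k ` C = D"

definition componentwise_pushout ::
  "ugraph \<Rightarrow> ugraph \<Rightarrow> ugraph \<Rightarrow> ugraph \<Rightarrow> umor \<Rightarrow> umor \<Rightarrow> umor \<Rightarrow> bool" where
  "componentwise_pushout A B C D f h k \<longleftrightarrow>
     set_pushout (gE A) (gE B) (gE C) (gE D) (fst f) (fst h) (fst k) \<and>
     set_pushout (gV A) (gV B) (gV C) (gV D) (snd f) (snd h) (snd k)"

definition po_mediator ::
  "'a set \<Rightarrow> 'b set \<Rightarrow> 'c set \<Rightarrow> 'd set \<Rightarrow> ('a \<Rightarrow> 'b) \<Rightarrow> ('b \<Rightarrow> 'd) \<Rightarrow> ('c \<Rightarrow> 'd) \<Rightarrow>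
     ('b \<Rightarrow> 'x) \<Rightarrow> ('c \<Rightarrow> 'x) \<Rightarrow> 'd \<Rightarrow> 'x" where
  "po_mediator A B C D f h k x y =
     restrict (\<lambda>z. if z \<in> k ` C then y (inv_into C k z) else x (inv_into (B - f ` A) h z)) D"

lemma set_pushout_mediator:
  assumes po: "set_pushout A B C D f h k" and hk: "\<forall>a\<in>A. h (f a) = k (g a)" and g: "g ` A \<subseteq> C"
    and xy: "\<forall>a\<in>A. x (f a) = y (g a)"
  shows "\<And>b. b \<in> B \<Longrightarrow> po_mediator A B C D f h k x y (h b) = x b"
    "\<And>c. c \<in> C \<Longrightarrow> po_mediator A B C D f h k x y (k c) = y c"
proof -
  have k: "inj_on k C" and h: "inj_on h (B - f ` A)" and disj: "h ` (B - f ` A) \<inter> k ` C = {}"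
    and cover: "h ` B \<union> k ` C = D"
    using po unfolding set_pushout_def by auto
  show "po_mediator A B C D f h k x y (k c) = y c" if c: "c \<in> C" for c
  proof -
    have "k c \<in> D" "k c \<in> k ` C"
      using c cover by auto
    then show ?thesis
      using inv_into_f_f[OF k c] by (simp add: po_mediator_def)
  qed
  fix b assume b: "b \<in> B"
  then have hD: "h b \<in> D"
    using cover by auto
  show "po_mediator A B C D f h k x y (h b) = x b"
  proof (cases "b \<in> f ` A")
    case True
    then obtain a where a: "a \<in> A" "b = f a"
      by blast
    then have "h b = k (g a)" "g a \<in> C"
      using hk g by auto
    then show ?thesis
      using hD inv_into_f_f[OF k \<open>g a \<in> C\<close>] xy a by (auto simp: po_mediator_def)
  next
    case False
    with b disj have "h b \<notin> k ` C"
      by blast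
    then show ?thesis
      using hD inv_into_f_f[OF h] b False by (simp add: po_mediator_def)
  qed
qed

lemma hom_from_jointly_surjective:
  assumes h: "h \<in> hom B D" and k: "k \<in> hom C D" and x: "x \<in> hom B X" and y: "y \<in> hom C X"
    and cover: "fst h ` gE B \<union> fst k ` gE C = gE D" "snd h ` gV B \<union> snd k ` gV C = gV D"
    and ext: "fst u \<in> extensional (gE D)" "snd u \<in> extensional (gV D)"
    and uh: "cmp B u h = x" and uk: "cmp C u k = y"
  shows "u \<in> hom D X"
proof -
  have incidence: "gi X (fst u (fst h' b)) = snd u ` gi D (fst h' b)"
    if h': "h' \<in> hom B' D" and x': "x' \<in> hom B' X" and u: "cmp B' u h' = x'" and b: "b \<in> gE B'"
    for B' h' x' b
  proof -
    have uE: "fst u (fst h' b) = fst x' b" and uV: "\<forall>v\<in>gV B'. snd u (snd h' v) = snd x' v"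
      using u b unfolding cmp_eq_hom_iff[OF h' x'] by auto
    have "snd u ` gi D (fst h' b) = snd u ` snd h' ` gi B' b"
      using homD(5)[OF h' b] by simp
    also have "\<dots> = snd x' ` gi B' b"
      using uV ugD(5)[OF homD(1)[OF h'] b] by (force simp: image_image)
    also have "\<dots> = gi X (fst u (fst h' b))"
      using homD(5)[OF x' b] uE by simp
    finally show ?thesis ..
  qed
  have "\<forall>b\<in>gE B. fst u (fst h b) = fst x b" "\<forall>b\<in>gV B. snd u (snd h b) = snd x b"
    "\<forall>c\<in>gE C. fst u (fst k c) = fst y c" "\<forall>c\<in>gV C. snd u (snd k c) = snd y c"
    using uh uk unfolding cmp_eq_hom_iff[OF h x] cmp_eq_hom_iff[OF k y] by auto
  then have "fst u ` gE D \<subseteq> gE X" "snd u ` gV D \<subseteq> gV X"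
    unfolding cover[symmetric] using homD(6,7)[OF x] homD(6,7)[OF y] by auto
  moreover have "gi X (fst u e) = snd u ` gi D e" if "e \<in> gE D" for e
    using that incidence[OF h x uh] incidence[OF k y uk] unfolding cover(1)[symmetric] by auto
  ultimately show ?thesis
    using homD(2)[OF h] homD(2)[OF x] ext unfolding hom_iff by (auto simp: PiE_def)
qed

lemma jointly_surjective_cancel:
  assumes cover: "fst h ` gE B \<union> fst k ` gE C = gE D" "snd h ` gV B \<union> snd k ` gV C = gV D"
    and u: "u \<in> hom D X" "u' \<in> hom D X'" and eq: "cmp B u h = cmp B u' h" "cmp C u k = cmp C u' k"
  shows "u = u'"
proof (rule hom_eqI[OF u])
  show "fst u e = fst u' e" if "e \<in> gE D" for e
    using that cmp_eqD(1)[OF eq(1)] cmp_eqD(1)[OF eq(2)] unfolding cover(1)[symmetric] by auto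
  show "snd u v = snd u' v" if "v \<in> gV D" for v
    using that cmp_eqD(2)[OF eq(1)] cmp_eqD(2)[OF eq(2)] unfolding cover(2)[symmetric] by auto
qed

lemma componentwise_pushout_mediator:
  assumes sq: "comm_sq A B C D f g h k" and po: "componentwise_pushout A B C D f h k"
    and x: "x \<in> hom B X" and y: "y \<in> hom C X" and xy: "cmp A x f = cmp A y g"
  obtains u where "u \<in> hom D X" "cmp B u h = x" "cmp C u k = y"
proof -
  have g: "g \<in> hom A C" and h: "h \<in> hom B D" and k: "k \<in> hom C D" and hk: "cmp A h f = cmp A k g"
    using sq unfolding comm_sq_def by auto
  note poE = po[unfolded componentwise_pushout_def, THEN conjunct1]
  note poV = po[unfolded componentwise_pushout_def, THEN conjunct2]
  define u where "u =
    (po_mediator (gE A) (gE B) (gE C) (gE D) (fst f) (fst h) (fst k) (fst x) (fst y),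
     po_mediator (gV A) (gV B) (gV C) (gV D) (snd f) (snd h) (snd k) (snd x) (snd y))"
  note mE = set_pushout_mediator[OF poE _ homD(6)[OF g], of "fst x" "fst y"]
  note mV = set_pushout_mediator[OF poV _ homD(7)[OF g], of "snd x" "snd y"]
  have uh: "cmp B u h = x"
    unfolding cmp_eq_hom_iff[OF h x] using mE(1) mV(1) cmp_eqD[OF hk] cmp_eqD[OF xy] by (simp add: u_def)
  moreover have uk: "cmp C u k = y"
    unfolding cmp_eq_hom_iff[OF k y] using mE(2) mV(2) cmp_eqD[OF hk] cmp_eqD[OF xy] by (simp add: u_def)
  moreover have cover: "fst h ` gE B \<union> fst k ` gE C = gE D" "snd h ` gV B \<union> snd k ` gV C = gV D"
    using poE poV unfolding set_pushout_def by auto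
  then have "u \<in> hom D X"
    by (rule hom_from_jointly_surjective[OF h k x y _ _ _ _ uh uk]) (simp_all add: u_def po_mediator_def)
  ultimately show ?thesis
    using that by blast
qed

lemma pushoutI:
  assumes sq: "comm_sq A B C D f g h k" and po: "componentwise_pushout A B C D f h k"
  shows "pushout A B C D f g h k"
  unfolding pushout_def
proof (intro conjI allI impI)
  show "comm_sq A B C D f g h k" by fact
  fix X x y assume x: "x \<in> hom B X" and y: "y \<in> hom C X" and xy: "cmp A x f = cmp A y g"
  obtain u where u: "u \<in> hom D X" "cmp B u h = x" "cmp C u k = y"
    using componentwise_pushout_mediator[OF sq po x y xy] .
  have cover: "fst h ` gE B \<union> fst k ` gE C = gE D" "snd h ` gV B \<union> snd k ` gV C = gV D"
    using po unfolding componentwise_pushout_def set_pushout_def by auto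
  show "\<exists>!u. u \<in> hom D X \<and> cmp B u h = x \<and> cmp C u k = y"
  proof (rule ex1I[of _ u])
    fix u' assume "u' \<in> hom D X \<and> cmp B u' h = x \<and> cmp C u' k = y"
    then show "u' = u"
      using jointly_surjective_cancel[OF cover, of u' X u X] u by simp
  qed (use u in simp)
qed

text \<open>The pushout object is built by parity: an item \<open>c\<close> of \<open>C\<close> becomes \<open>2 * c\<close>, an item
  \<open>b\<close> of \<open>B\<close> outside the image of \<open>f\<close> becomes \<open>2 * b + 1\<close>, and \<open>f a\<close> is glued to \<open>2 * g a\<close>.\<close>

definition po_set :: "nat set \<Rightarrow> nat set \<Rightarrow> nat set \<Rightarrow> (nat \<Rightarrow> nat) \<Rightarrow> nat set" where
  "po_set A B C f = (\<lambda>c. 2 * c) ` C \<union> (\<lambda>b. 2 * b + 1) ` (B - f ` A)"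

definition po_inl :: "nat set \<Rightarrow> nat set \<Rightarrow> (nat \<Rightarrow> nat) \<Rightarrow> (nat \<Rightarrow> nat) \<Rightarrow> nat \<Rightarrow> nat" where
  "po_inl A B f g = restrict (\<lambda>b. if b \<in> f ` A then 2 * g (inv_into A f b) else 2 * b + 1) B"

definition po_inr :: "nat set \<Rightarrow> nat \<Rightarrow> nat" where
  "po_inr C = restrict (\<lambda>c. 2 * c) C"

lemma po_inl_image:
  "inj_on f A \<Longrightarrow> a \<in> A \<Longrightarrow> f ` A \<subseteq> B \<Longrightarrow> po_inl A B f g (f a) = 2 * g a"
  by (auto simp: po_inl_def)

lemma po_inl_outside: "b \<in> B \<Longrightarrow> b \<notin> f ` A \<Longrightarrow> po_inl A B f g b = 2 * b + 1"
  by (simp add: po_inl_def)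

lemma set_pushout_po_set:
  assumes f: "inj_on f A" "f ` A \<subseteq> B" and g: "g ` A \<subseteq> C"
  shows "set_pushout A B C (po_set A B C f) f (po_inl A B f g) (po_inr C)"
    "po_inl A B f g \<in> B \<rightarrow>\<^sub>E po_set A B C f" "po_inr C \<in> C \<rightarrow>\<^sub>E po_set A B C f"
    "\<forall>a\<in>A. po_inl A B f g (f a) = po_inr C (g a)"
proof -
  show "\<forall>a\<in>A. po_inl A B f g (f a) = po_inr C (g a)"
    using f g by (auto simp: po_inl_image po_inr_def)
  show inl: "po_inl A B f g \<in> B \<rightarrow>\<^sub>E po_set A B C f"
    using f g by (auto simp: po_inl_def po_set_def image_subset_iff)
  show inr: "po_inr C \<in> C \<rightarrow>\<^sub>E po_set A B C f"
    by (auto simp: po_inr_def po_set_def)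
  have "inj_on (po_inr C) C" "inj_on (po_inl A B f g) (B - f ` A)"
    by (auto simp: po_inr_def po_inl_def inj_on_def)
  moreover have "po_inl A B f g ` (B - f ` A) \<inter> po_inr C ` C = {}"
    by (auto simp: po_inl_def po_inr_def) presburger
  moreover have "po_set A B C f \<subseteq> po_inl A B f g ` B \<union> po_inr C ` C"
  proof
    fix z assume "z \<in> po_set A B C f"
    then consider c where "c \<in> C" "z = 2 * c" | b where "b \<in> B - f ` A" "z = 2 * b + 1"
      unfolding po_set_def by blast
    then show "z \<in> po_inl A B f g ` B \<union> po_inr C ` C"
    proof cases
      case (2 b)
      then have "z = po_inl A B f g b"
        by (simp add: po_inl_outside)
      with 2 show ?thesis
        by blast
    qed (auto simp: po_inr_def)
  qed
  ultimately show "set_pushout A B C (po_set A B C f) f (po_inl A B f g) (po_inr C)"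
    using inl inr unfolding set_pushout_def by (auto simp: PiE_def)
qed

definition po_graph :: "ugraph \<Rightarrow> ugraph \<Rightarrow> ugraph \<Rightarrow> umor \<Rightarrow> umor \<Rightarrow> ugraph" where
  "po_graph A B C f g =
     (po_set (gE A) (gE B) (gE C) (fst f), po_set (gV A) (gV B) (gV C) (snd f),
      restrict (\<lambda>n. if even n then po_inr (gV C) ` gi C (n div 2)
                    else po_inl (gV A) (gV B) (snd f) (snd g) ` gi B (n div 2))
        (po_set (gE A) (gE B) (gE C) (fst f)))"

definition po_left :: "ugraph \<Rightarrow> ugraph \<Rightarrow> umor \<Rightarrow> umor \<Rightarrow> umor" where
  "po_left A B f g = (po_inl (gE A) (gE B) (fst f) (fst g), po_inl (gV A) (gV B) (snd f) (snd g))"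

definition po_right :: "ugraph \<Rightarrow> umor" where
  "po_right C = (po_inr (gE C), po_inr (gV C))"

lemma gi_po_graph_even:
  "c \<in> gE C \<Longrightarrow> gi (po_graph A B C f g) (2 * c) = po_inr (gV C) ` gi C c"
  by (simp add: po_graph_def po_set_def)

lemma gi_po_graph_odd:
  "b \<in> gE B \<Longrightarrow> b \<notin> fst f ` gE A \<Longrightarrow>
     gi (po_graph A B C f g) (2 * b + 1) = po_inl (gV A) (gV B) (snd f) (snd g) ` gi B b"
  by (simp add: po_graph_def po_set_def)

context
  fixes A B C :: ugraph and f g :: umor
  assumes f: "Mm A B f" and g: "g \<in> hom A C"
begin

lemma po_sets:
  "set_pushout (gE A) (gE B) (gE C) (po_set (gE A) (gE B) (gE C) (fst f)) (fst f)
     (po_inl (gE A) (gE B) (fst f) (fst g)) (po_inr (gE C))"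
  "po_inl (gE A) (gE B) (fst f) (fst g) \<in> gE B \<rightarrow>\<^sub>E po_set (gE A) (gE B) (gE C) (fst f)"
  "po_inr (gE C) \<in> gE C \<rightarrow>\<^sub>E po_set (gE A) (gE B) (gE C) (fst f)"
  "\<forall>a\<in>gE A. po_inl (gE A) (gE B) (fst f) (fst g) (fst f a) = po_inr (gE C) (fst g a)"
  "set_pushout (gV A) (gV B) (gV C) (po_set (gV A) (gV B) (gV C) (snd f)) (snd f)
     (po_inl (gV A) (gV B) (snd f) (snd g)) (po_inr (gV C))"
  "po_inl (gV A) (gV B) (snd f) (snd g) \<in> gV B \<rightarrow>\<^sub>E po_set (gV A) (gV B) (gV C) (snd f)"
  "po_inr (gV C) \<in> gV C \<rightarrow>\<^sub>E po_set (gV A) (gV B) (gV C) (snd f)"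
  "\<forall>a\<in>gV A. po_inl (gV A) (gV B) (snd f) (snd g) (snd f a) = po_inr (gV C) (snd g a)"
  using set_pushout_po_set[OF MmD(2)[OF f] homD(6)[OF MmD(1)[OF f]] homD(6)[OF g]]
    set_pushout_po_set[OF MmD(3)[OF f] homD(7)[OF MmD(1)[OF f]] homD(7)[OF g]] by blast+

lemma ug_po_graph: "ug (po_graph A B C f g)"
proof (rule ugI)
  have B: "ug B" and C: "ug C"
    using homD(2)[OF MmD(1)[OF f]] homD(2)[OF g] .
  show "finite (gE (po_graph A B C f g))" "finite (gV (po_graph A B C f g))"
    using ugD(1,2)[OF B] ugD(1,2)[OF C] by (simp_all add: po_graph_def po_set_def)
  fix n assume "n \<in> gE (po_graph A B C f g)"
  then consider c where "c \<in> gE C" "n = 2 * c" | b where "b \<in> gE B" "b \<notin> fst f ` gE A" "n = 2 * b + 1"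
    by (auto simp: po_graph_def po_set_def)
  then show "gi (po_graph A B C f g) n \<in> P12 (gV (po_graph A B C f g))"
  proof cases
    case 1
    have "po_inr (gV C) ` gi C c \<subseteq> gV (po_graph A B C f g)"
      using po_sets(7) ugD(5)[OF C 1(1)] by (auto simp: po_graph_def)
    then show ?thesis
      using gi_po_graph_even[OF 1(1)] P12_image[OF ugD(4)[OF C 1(1)]] 1(2) by simp
  next
    case 2
    have "po_inl (gV A) (gV B) (snd f) (snd g) ` gi B b \<subseteq> gV (po_graph A B C f g)"
      using po_sets(6) ugD(5)[OF B 2(1)] by (auto simp: po_graph_def)
    then show ?thesis
      using gi_po_graph_odd[OF 2(1,2)] P12_image[OF ugD(4)[OF B 2(1)]] 2(3) by simp
  qed
qed (simp add: po_graph_def)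

lemma po_left_hom: "po_left A B f g \<in> hom B (po_graph A B C f g)"
  unfolding hom_iff
proof (intro conjI ballI)
  have fh: "f \<in> hom A B"
    using MmD(1)[OF f] .
  fix e assume e: "e \<in> gE B"
  show "gi (po_graph A B C f g) (fst (po_left A B f g) e) = snd (po_left A B f g) ` gi B e"
  proof (cases "e \<in> fst f ` gE A")
    case True
    then obtain a where a: "a \<in> gE A" "e = fst f a"
      by blast
    have "gi (po_graph A B C f g) (fst (po_left A B f g) e) = po_inr (gV C) ` snd g ` gi A a"
      using a po_sets(4) gi_po_graph_even homD(6)[OF g] homD(5)[OF g]
      by (auto simp: po_left_def po_inr_def)
    also have "\<dots> = po_inl (gV A) (gV B) (snd f) (snd g) ` snd f ` gi A a"
      using po_sets(8) ugD(5)[OF homD(1)[OF g] a(1)] by (force simp: image_image)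
    finally show ?thesis
      using a homD(5)[OF fh a(1)] by (simp add: po_left_def)
  qed (use e gi_po_graph_odd po_inl_outside in \<open>simp add: po_left_def\<close>)
qed (use homD(2)[OF MmD(1)[OF f]] ug_po_graph po_sets(2,6) in \<open>simp_all add: po_left_def po_graph_def\<close>)

lemma po_right_hom: "po_right C \<in> hom C (po_graph A B C f g)"
  unfolding hom_iff
proof (intro conjI ballI)
  fix e assume "e \<in> gE C"
  then show "gi (po_graph A B C f g) (fst (po_right C) e) = snd (po_right C) ` gi C e"
    using gi_po_graph_even by (simp add: po_right_def po_inr_def)
qed (use homD(2)[OF g] ug_po_graph po_sets(3,7) in \<open>simp_all add: po_right_def po_graph_def\<close>)

lemma po_graph_pushout:
  "comm_sq A B C (po_graph A B C f g) f g (po_left A B f g) (po_right C)"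
  "componentwise_pushout A B C (po_graph A B C f g) f (po_left A B f g) (po_right C)"
proof -
  have "cmp A (po_left A B f g) f = cmp A (po_right C) g"
    using po_sets(4,8) unfolding cmp_eq_iff by (simp add: po_left_def po_right_def)
  then show "comm_sq A B C (po_graph A B C f g) f g (po_left A B f g) (po_right C)"
    unfolding comm_sq_def using MmD(1)[OF f] g po_left_hom po_right_hom by blast
  show "componentwise_pushout A B C (po_graph A B C f g) f (po_left A B f g) (po_right C)"
    unfolding componentwise_pushout_def using po_sets(1,5)
    by (simp add: po_left_def po_right_def po_graph_def)
qed

end

lemma pushout_exists: "Mm A B f \<Longrightarrow> g \<in> hom A C \<Longrightarrow> \<exists>D h k. pushout A B C D f g h k"
  using pushoutI[OF po_graph_pushout] by blast

lemma pushout_endo_idm: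
  assumes po: "pushout A B C D f g h k" and v: "v \<in> hom D D" "cmp B v h = h" "cmp C v k = k"
  shows "v = idm D"
proof -
  have h: "h \<in> hom B D" and k: "k \<in> hom C D" and hk: "cmp A h f = cmp A k g"
    using po unfolding pushout_def comm_sq_def by auto
  have "idm D \<in> hom D D" "cmp B (idm D) h = h" "cmp C (idm D) k = k"
    using idm_hom[OF homD(2)[OF h]] cmp_idm_left[OF h] cmp_idm_left[OF k] by auto
  with v po h k hk show ?thesis
    unfolding pushout_def by blast
qed

lemma pushout_unique_iso:
  assumes po: "pushout A B C D f g h k" and po': "pushout A B C D' f g h' k'"
  obtains w where "iso D D' w" "cmp B w h = h'" "cmp C w k = k'"
proof -
  have h: "h \<in> hom B D" and k: "k \<in> hom C D" and hk: "cmp A h f = cmp A k g"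
    and h': "h' \<in> hom B D'" and k': "k' \<in> hom C D'" and hk': "cmp A h' f = cmp A k' g"
    using po po' unfolding pushout_def comm_sq_def by auto
  obtain w where w: "w \<in> hom D D'" "cmp B w h = h'" "cmp C w k = k'"
    using po h' k' hk' unfolding pushout_def by blast
  obtain u where u: "u \<in> hom D' D" "cmp B u h' = h" "cmp C u k' = k"
    using po' h k hk unfolding pushout_def by blast
  have "cmp D u w = idm D"
    using cmp_hom[OF w(1) u(1)] w u cmp_assoc[OF h, of u w] cmp_assoc[OF k, of u w]
    by (intro pushout_endo_idm[OF po]) simp_all
  moreover have "cmp D' w u = idm D'"
    using cmp_hom[OF u(1) w(1)] w u cmp_assoc[OF h', of w u] cmp_assoc[OF k', of w u]
    by (intro pushout_endo_idm[OF po']) simp_all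
  ultimately have "iso D D' w"
    unfolding iso_def using w(1) u(1) by blast
  with w that show ?thesis
    by blast
qed

lemma set_pushout_bij_transfer:
  assumes po: "set_pushout A B C D' f h' k'" and w: "bij_betw w D D'"
    and hk: "h ` B \<subseteq> D" "k ` C \<subseteq> D" and wh: "\<forall>b\<in>B. w (h b) = h' b" and wk: "\<forall>c\<in>C. w (k c) = k' c"
  shows "set_pushout A B C D f h k"
proof -
  have k': "inj_on k' C" and h': "inj_on h' (B - f ` A)" and disj: "h' ` (B - f ` A) \<inter> k' ` C = {}"
    and cover: "h' ` B \<union> k' ` C = D'"
    using po unfolding set_pushout_def by auto
  have "inj_on (w \<circ> k) C" "inj_on (w \<circ> h) (B - f ` A)"
    using k' h' wh wk unfolding inj_on_def by auto
  then have "inj_on k C" "inj_on h (B - f ` A)"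
    by (auto dest: inj_on_imageI2)
  moreover have "h ` (B - f ` A) \<inter> k ` C = {}"
  proof -
    have False if "b \<in> B - f ` A" "c \<in> C" "h b = k c" for b c
      using that disj wh wk by (metis DiffD1 disjoint_iff image_eqI)
    then show ?thesis
      by blast
  qed
  moreover have "D \<subseteq> h ` B \<union> k ` C"
  proof
    fix z assume z: "z \<in> D"
    then have "w z \<in> h' ` B \<union> k' ` C"
      using w cover by (auto simp: bij_betw_def)
    then obtain y where "y \<in> h ` B \<union> k ` C" "w z = w y"
      using wh wk by (metis UnE UnI1 UnI2 image_iff)
    moreover have "y \<in> D"
      using calculation(1) hk by blast
    ultimately show "z \<in> h ` B \<union> k ` C"
      using inj_onD[OF bij_betw_imp_inj_on[OF w]] z by metis
  qed
  ultimately show ?thesis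
    unfolding set_pushout_def using hk by auto
qed

lemma pushout_componentwise:
  assumes po: "pushout A B C D f g h k" and f: "Mm A B f"
  shows "componentwise_pushout A B C D f h k"
proof -
  have g: "g \<in> hom A C" and h: "h \<in> hom B D" and k: "k \<in> hom C D"
    using po unfolding pushout_def comm_sq_def by auto
  note po0 = po_graph_pushout[OF f g]
  obtain w where w: "iso D (po_graph A B C f g) w" "cmp B w h = po_left A B f g" "cmp C w k = po_right C"
    using pushout_unique_iso[OF po pushoutI[OF po0]] by blast
  have wh: "w \<in> hom D (po_graph A B C f g)"
    using w(1) unfolding iso_def by blast
  have h0: "po_left A B f g \<in> hom B (po_graph A B C f g)" and k0: "po_right C \<in> hom C (po_graph A B C f g)"
    using po0(1) unfolding comm_sq_def by auto
  note bij = w(1)[unfolded iso_iff_bij[OF wh]]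
  note eqh = w(2)[unfolded cmp_eq_hom_iff[OF h h0]] and eqk = w(3)[unfolded cmp_eq_hom_iff[OF k k0]]
  note po0' = po0(2)[unfolded componentwise_pushout_def]
  show ?thesis
    unfolding componentwise_pushout_def
    using set_pushout_bij_transfer[OF po0'[THEN conjunct1] bij[THEN conjunct1] homD(6)[OF h] homD(6)[OF k]]
      set_pushout_bij_transfer[OF po0'[THEN conjunct2] bij[THEN conjunct2] homD(7)[OF h] homD(7)[OF k]]
      eqh eqk by blast
qed

lemma pushout_iff_componentwise:
  assumes "comm_sq A B C D f g h k" "Mm A B f"
  shows "pushout A B C D f g h k \<longleftrightarrow> componentwise_pushout A B C D f h k"
  using pushoutI[OF assms(1)] pushout_componentwise[OF _ assms(2)] by blast

section \<open>Pullbacks along \<open>\<M>\<close>-morphisms\<close>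

definition set_pullback ::
  "'a set \<Rightarrow> 'b set \<Rightarrow> 'c set \<Rightarrow> ('a \<Rightarrow> 'b) \<Rightarrow> ('b \<Rightarrow> 'd) \<Rightarrow> ('c \<Rightarrow> 'd) \<Rightarrow> bool" where
  "set_pullback A B C f h k \<longleftrightarrow> inj_on f A \<and> (\<forall>x\<in>B. h x \<in> k ` C \<longrightarrow> x \<in> f ` A)"

definition componentwise_pullback ::
  "ugraph \<Rightarrow> ugraph \<Rightarrow> ugraph \<Rightarrow> umor \<Rightarrow> umor \<Rightarrow> umor \<Rightarrow> bool" where
  "componentwise_pullback A B C f h k \<longleftrightarrow>
     set_pullback (gE A) (gE B) (gE C) (fst f) (fst h) (fst k) \<and>
     set_pullback (gV A) (gV B) (gV C) (snd f) (snd h) (snd k)"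

lemma set_pullback_lift:
  assumes pb: "set_pullback A B C f h k" and k: "inj_on k C" and g: "g ` A \<subseteq> C"
    and hk: "\<forall>a\<in>A. h (f a) = k (g a)" and x: "x ` X \<subseteq> B" and y: "y ` X \<subseteq> C"
    and xy: "\<forall>z\<in>X. h (x z) = k (y z)" and z: "z \<in> X"
  shows "inv_into A f (x z) \<in> A" "f (inv_into A f (x z)) = x z" "g (inv_into A f (x z)) = y z"
proof -
  have "x z \<in> f ` A"
    using pb x y xy z unfolding set_pullback_def by blast
  then show a: "inv_into A f (x z) \<in> A" and fa: "f (inv_into A f (x z)) = x z"
    by (auto intro: inv_into_into f_inv_into_f)
  have "k (g (inv_into A f (x z))) = k (y z)"
    using hk a fa xy z by metis
  then show "g (inv_into A f (x z)) = y z"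
    using inj_onD[OF k] a g y z by blast
qed

lemma hom_lift_Mm:
  assumes f: "Mm A B f" and x: "x \<in> hom X B"
    and u: "fst u \<in> gE X \<rightarrow>\<^sub>E gE A" "snd u \<in> gV X \<rightarrow>\<^sub>E gV A"
    and fu: "\<forall>e\<in>gE X. fst f (fst u e) = fst x e" "\<forall>v\<in>gV X. snd f (snd u v) = snd x v"
  shows "u \<in> hom X A"
proof -
  have uA: "ug A" and uX: "ug X"
    using homD(1)[OF MmD(1)[OF f]] homD(1)[OF x] .
  have "gi A (fst u e) = snd u ` gi X e" if e: "e \<in> gE X" for e
  proof -
    have ue: "fst u e \<in> gE A"
      using u(1) e by auto
    have "snd f ` gi A (fst u e) = snd x ` gi X e"
      using homD(5)[OF MmD(1)[OF f] ue] homD(5)[OF x e] fu(1) e by simp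
    also have "\<dots> = snd f ` snd u ` gi X e"
      using fu(2) ugD(5)[OF uX e] by (force simp: image_image)
    moreover have "snd u ` gi X e \<subseteq> gV A"
      using PiE_mem[OF u(2)] ugD(5)[OF uX e] by blast
    ultimately show ?thesis
      using inj_on_image_eq_iff[OF MmD(3)[OF f] ugD(5)[OF uA ue]] by simp
  qed
  then show ?thesis
    unfolding hom_iff using uA uX u by simp
qed

lemma componentwise_pullback_mediator:
  assumes sq: "comm_sq A B C D f g h k" and k: "Mm C D k" and pb: "componentwise_pullback A B C f h k"
    and x: "x \<in> hom X B" and y: "y \<in> hom X C" and xy: "cmp X h x = cmp X k y"
  obtains u where "u \<in> hom X A" "cmp X f u = x" "cmp X g u = y"
proof -
  have f: "f \<in> hom A B" and g: "g \<in> hom A C" and hk: "cmp A h f = cmp A k g"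
    using sq unfolding comm_sq_def by auto
  note pbE = pb[unfolded componentwise_pullback_def, THEN conjunct1]
  note pbV = pb[unfolded componentwise_pullback_def, THEN conjunct2]
  have fM: "Mm A B f"
    using f pbE pbV unfolding Mm_def set_pullback_def by blast
  note hkEV = hk[unfolded cmp_eq_iff] and xyEV = xy[unfolded cmp_eq_iff]
  define u where "u = (restrict (inv_into (gE A) (fst f) \<circ> fst x) (gE X),
    restrict (inv_into (gV A) (snd f) \<circ> snd x) (gV X))"
  note lE = set_pullback_lift[OF pbE MmD(2)[OF k] homD(6)[OF g] hkEV[THEN conjunct1] homD(6)[OF x]
      homD(6)[OF y] xyEV[THEN conjunct1]]
  note lV = set_pullback_lift[OF pbV MmD(3)[OF k] homD(7)[OF g] hkEV[THEN conjunct2] homD(7)[OF x]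
      homD(7)[OF y] xyEV[THEN conjunct2]]
  have uE: "\<forall>z\<in>gE X. fst u z \<in> gE A \<and> fst f (fst u z) = fst x z \<and> fst g (fst u z) = fst y z"
    and uV: "\<forall>z\<in>gV X. snd u z \<in> gV A \<and> snd f (snd u z) = snd x z \<and> snd g (snd u z) = snd y z"
    using lE lV by (simp_all add: u_def)
  have u: "u \<in> hom X A"
    by (rule hom_lift_Mm[OF fM x]) (use uE uV in \<open>auto simp: u_def\<close>)
  moreover have "cmp X f u = x" "cmp X g u = y"
    unfolding cmp_eq_hom_iff[OF u x] cmp_eq_hom_iff[OF u y] using uE uV by simp_all
  ultimately show ?thesis
    using that by blast
qed

lemma pullbackI:
  assumes sq: "comm_sq A B C D f g h k" and k: "Mm C D k" and pb: "componentwise_pullback A B C f h k"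
  shows "pullback A B C D f g h k"
  unfolding pullback_def
proof (intro conjI allI impI)
  show "comm_sq A B C D f g h k" by fact
  fix X x y assume x: "x \<in> hom X B" and y: "y \<in> hom X C" and xy: "cmp X h x = cmp X k y"
  obtain u where u: "u \<in> hom X A" "cmp X f u = x" "cmp X g u = y"
    using componentwise_pullback_mediator[OF sq k pb x y xy] .
  have fM: "Mm A B f"
    using sq pb unfolding comm_sq_def componentwise_pullback_def set_pullback_def Mm_def by blast
  show "\<exists>!u. u \<in> hom X A \<and> cmp X f u = x \<and> cmp X g u = y"
  proof (rule ex1I[of _ u])
    fix u' assume "u' \<in> hom X A \<and> cmp X f u' = x \<and> cmp X g u' = y"
    then show "u' = u"
      using Mm_cancel[OF fM, of u' X u] u by simp
  qed (use u in simp)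
qed

definition pb_edges :: "ugraph \<Rightarrow> ugraph \<Rightarrow> umor \<Rightarrow> umor \<Rightarrow> nat set" where
  "pb_edges B C h k = {e \<in> gE B. fst h e \<in> fst k ` gE C}"

definition pb_verts :: "ugraph \<Rightarrow> ugraph \<Rightarrow> umor \<Rightarrow> umor \<Rightarrow> nat set" where
  "pb_verts B C h k = {v \<in> gV B. snd h v \<in> snd k ` gV C}"

definition pb_graph :: "ugraph \<Rightarrow> ugraph \<Rightarrow> umor \<Rightarrow> umor \<Rightarrow> ugraph" where
  "pb_graph B C h k = subgraph B (pb_edges B C h k) (pb_verts B C h k)"

definition pb_left :: "ugraph \<Rightarrow> ugraph \<Rightarrow> umor \<Rightarrow> umor \<Rightarrow> umor" where
  "pb_left B C h k = inclusion (pb_edges B C h k) (pb_verts B C h k)"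

definition pb_right :: "ugraph \<Rightarrow> ugraph \<Rightarrow> umor \<Rightarrow> umor \<Rightarrow> umor" where
  "pb_right B C h k =
     (restrict (inv_into (gE C) (fst k) \<circ> fst h) (pb_edges B C h k),
      restrict (inv_into (gV C) (snd k) \<circ> snd h) (pb_verts B C h k))"

lemma pb_graph_pullback:
  assumes h: "h \<in> hom B D" and k: "Mm C D k"
  shows "comm_sq (pb_graph B C h k) B C D (pb_left B C h k) (pb_right B C h k) h k"
    "componentwise_pullback (pb_graph B C h k) B C (pb_left B C h k) h k"
proof -
  let ?E = "pb_edges B C h k" and ?V = "pb_verts B C h k"
  let ?A = "pb_graph B C h k" and ?f = "pb_left B C h k" and ?g = "pb_right B C h k"
  have uB: "ug B" and uC: "ug C"
    using homD(1)[OF h] homD(1)[OF MmD(1)[OF k]] .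
  have "gi B e \<subseteq> ?V" if e: "e \<in> ?E" for e
  proof -
    obtain c where c: "c \<in> gE C" "fst h e = fst k c"
      using e by (auto simp: pb_edges_def)
    have eB: "e \<in> gE B"
      using e by (simp add: pb_edges_def)
    have "snd h ` gi B e = snd k ` gi C c"
      using homD(5)[OF h eB] homD(5)[OF MmD(1)[OF k] c(1)] c(2) by simp
    then show ?thesis
      using ugD(5)[OF uB] ugD(5)[OF uC c(1)] e by (fastforce simp: pb_verts_def pb_edges_def)
  qed
  then have sub: "subgraph_carriers B ?E ?V"
    unfolding subgraph_carriers_def by (auto simp: pb_edges_def pb_verts_def)
  have f: "?f \<in> hom ?A B"
    using MmD(1)[OF Mm_inclusion[OF uB sub]] by (simp add: pb_graph_def pb_left_def)
  have hf: "cmp ?A h ?f \<in> hom ?A D"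
    using cmp_hom[OF f h] .
  have gE: "\<forall>e\<in>?E. inv_into (gE C) (fst k) (fst h e) \<in> gE C \<and> fst k (inv_into (gE C) (fst k) (fst h e)) = fst h e"
    and gV: "\<forall>v\<in>?V. inv_into (gV C) (snd k) (snd h v) \<in> gV C \<and> snd k (inv_into (gV C) (snd k) (snd h v)) = snd h v"
    by (auto simp: pb_edges_def pb_verts_def intro: inv_into_into f_inv_into_f)
  have g: "?g \<in> hom ?A C"
    by (rule hom_lift_Mm[OF k hf]) (use gE gV in \<open>auto simp: pb_right_def pb_left_def pb_graph_def subgraph_def inclusion_def\<close>)
  have "cmp ?A h ?f = cmp ?A k ?g"
    unfolding cmp_eq_iff using gE gV by (simp add: pb_right_def pb_left_def pb_graph_def subgraph_def inclusion_def)
  then show "comm_sq ?A B C D ?f ?g h k"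
    unfolding comm_sq_def using f g h MmD(1)[OF k] by blast
  show "componentwise_pullback ?A B C ?f h k"
    unfolding componentwise_pullback_def set_pullback_def
    by (auto simp: pb_graph_def pb_left_def subgraph_def inclusion_def pb_edges_def pb_verts_def)
qed

lemma pullback_exists: "h \<in> hom B D \<Longrightarrow> Mm C D k \<Longrightarrow> \<exists>A f g. pullback A B C D f g h k"
  using pullbackI[OF pb_graph_pullback(1) _ pb_graph_pullback(2)] by blast

lemma pullback_endo_idm:
  assumes pb: "pullback A B C D f g h k" and v: "v \<in> hom A A" "cmp A f v = f" "cmp A g v = g"
  shows "v = idm A"
proof -
  have f: "f \<in> hom A B" and g: "g \<in> hom A C" and hk: "cmp A h f = cmp A k g"
    using pb unfolding pullback_def comm_sq_def by auto
  have "idm A \<in> hom A A" "cmp A f (idm A) = f" "cmp A g (idm A) = g"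
    using idm_hom[OF homD(1)[OF f]] cmp_idm_right[OF f] cmp_idm_right[OF g] by auto
  with v pb f g hk show ?thesis
    unfolding pullback_def by blast
qed

lemma pullback_unique_iso:
  assumes pb: "pullback A B C D f g h k" and pb': "pullback A' B C D f' g' h k"
  obtains w where "iso A A' w" "cmp A f' w = f" "cmp A g' w = g"
proof -
  have f: "f \<in> hom A B" and g: "g \<in> hom A C" and hk: "cmp A h f = cmp A k g"
    and f': "f' \<in> hom A' B" and g': "g' \<in> hom A' C" and hk': "cmp A' h f' = cmp A' k g'"
    using pb pb' unfolding pullback_def comm_sq_def by auto
  obtain w where w: "w \<in> hom A A'" "cmp A f' w = f" "cmp A g' w = g"
    using pb' f g hk unfolding pullback_def by blast
  obtain u where u: "u \<in> hom A' A" "cmp A' f u = f'" "cmp A' g u = g'"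
    using pb f' g' hk' unfolding pullback_def by blast
  have "cmp A u w = idm A"
    using cmp_hom[OF w(1) u(1)] w u cmp_assoc[OF w(1), of f u] cmp_assoc[OF w(1), of g u]
    by (intro pullback_endo_idm[OF pb]) simp_all
  moreover have "cmp A' w u = idm A'"
    using cmp_hom[OF u(1) w(1)] w u cmp_assoc[OF u(1), of f' w] cmp_assoc[OF u(1), of g' w]
    by (intro pullback_endo_idm[OF pb']) simp_all
  ultimately have "iso A A' w"
    unfolding iso_def using w(1) u(1) by blast
  with w that show ?thesis
    by blast
qed

lemma set_pullback_bij_transfer:
  assumes pb: "set_pullback A' B C f' h k" and w: "bij_betw w A A'" and fw: "\<forall>a\<in>A. f' (w a) = f a"
  shows "set_pullback A B C f h k"
proof -
  have "inj_on (f' \<circ> w) A"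
    using pb w unfolding set_pullback_def bij_betw_def by (auto intro: comp_inj_on)
  then have "inj_on f A"
    using fw by (simp add: inj_on_def)
  moreover have "f ` A = f' ` w ` A"
    unfolding image_image using fw by (intro image_cong) auto
  then have "f ` A = f' ` A'"
    using bij_betw_imp_surj_on[OF w] by simp
  ultimately show ?thesis
    using pb unfolding set_pullback_def by simp
qed

lemma pullback_componentwise:
  assumes pb: "pullback A B C D f g h k" and k: "Mm C D k"
  shows "componentwise_pullback A B C f h k"
proof -
  have f: "f \<in> hom A B" and h: "h \<in> hom B D"
    using pb unfolding pullback_def comm_sq_def by auto
  note pb0 = pb_graph_pullback[OF h k]
  obtain w where w: "iso A (pb_graph B C h k) w" "cmp A (pb_left B C h k) w = f"
    using pullback_unique_iso[OF pb pullbackI[OF pb0(1) k pb0(2)]] by blast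
  have wh: "w \<in> hom A (pb_graph B C h k)"
    using w(1) unfolding iso_def by blast
  note bij = w(1)[unfolded iso_iff_bij[OF wh]]
  note eq = w(2)[unfolded cmp_eq_hom_iff[OF wh f]]
  note pb0' = pb0(2)[unfolded componentwise_pullback_def]
  show ?thesis
    unfolding componentwise_pullback_def
    using set_pullback_bij_transfer[OF pb0'[THEN conjunct1] bij[THEN conjunct1]]
      set_pullback_bij_transfer[OF pb0'[THEN conjunct2] bij[THEN conjunct2]] eq by blast
qed

lemma pullback_iff_componentwise:
  assumes "comm_sq A B C D f g h k" "Mm C D k"
  shows "pullback A B C D f g h k \<longleftrightarrow> componentwise_pullback A B C f h k"
  using pullbackI[OF assms(1,2)] pullback_componentwise[OF _ assms(2)] by blast

section \<open>\<open>\<M>\<close>-adhesivity\<close>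

lemma pullback_swap: "pullback A B C D f g h k \<Longrightarrow> pullback A C B D g f k h"
  unfolding pullback_def comm_sq_def by metis

lemma Mm_pushout_stable:
  assumes "pushout A B C D f g h k" "Mm A B f"
  shows "Mm C D k"
  using assms pushout_componentwise[OF assms]
  unfolding pushout_def comm_sq_def componentwise_pushout_def set_pushout_def Mm_def by blast

lemma Mm_pullback_stable:
  assumes "pullback A B C D f g h k" "Mm C D k"
  shows "Mm A B f"
  using assms pullback_componentwise[OF assms]
  unfolding pullback_def comm_sq_def componentwise_pullback_def set_pullback_def Mm_def by blast

locale set_cube =
  fixes A :: "'a set" and B :: "'b set" and C :: "'c set" and D :: "'d set"
    and A' :: "'e set" and B' :: "'f set" and C' :: "'g set" and D' :: "'h set"
    and f :: "'a \<Rightarrow> 'b" and g :: "'a \<Rightarrow> 'c" and h :: "'b \<Rightarrow> 'd" and k :: "'c \<Rightarrow> 'd"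
    and f' :: "'e \<Rightarrow> 'f" and g' :: "'e \<Rightarrow> 'g" and h' :: "'f \<Rightarrow> 'h" and k' :: "'g \<Rightarrow> 'h"
    and a :: "'e \<Rightarrow> 'a" and b :: "'f \<Rightarrow> 'b" and c :: "'g \<Rightarrow> 'c" and d :: "'h \<Rightarrow> 'd"
  assumes bottom: "set_pushout A B C D f h k" "\<forall>x\<in>A. h (f x) = k (g x)"
    and faces: "\<forall>x\<in>A'. b (f' x) = f (a x)" "\<forall>x\<in>A'. c (g' x) = g (a x)"
      "\<forall>x\<in>B'. d (h' x) = h (b x)" "\<forall>x\<in>C'. d (k' x) = k (c x)"
    and maps: "f ` A \<subseteq> B" "g ` A \<subseteq> C" "h ` B \<subseteq> D" "k ` C \<subseteq> D"
      "f' ` A' \<subseteq> B'" "g' ` A' \<subseteq> C'" "h' ` B' \<subseteq> D'" "k' ` C' \<subseteq> D'"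
      "a ` A' \<subseteq> A" "b ` B' \<subseteq> B" "c ` C' \<subseteq> C" "d ` D' \<subseteq> D"
    and vertical: "inj_on b B'" "inj_on c C'" "inj_on d D'"
    and back_faces: "set_pullback A' B' A f' b f" "set_pullback A' A C' a g c"
begin

lemma bottom_parts: "inj_on k C" "inj_on h (B - f ` A)" "h ` (B - f ` A) \<inter> k ` C = {}" "h ` B \<union> k ` C = D"
  using bottom(1) unfolding set_pushout_def by auto

lemma back_parts: "\<And>x. x \<in> B' \<Longrightarrow> b x \<in> f ` A \<Longrightarrow> x \<in> f' ` A'" "\<And>x. x \<in> A \<Longrightarrow> g x \<in> c ` C' \<Longrightarrow> x \<in> a ` A'"
  using back_faces unfolding set_pullback_def by auto

lemma in_image_c_if_top_pushout:
  assumes top: "set_pushout A' B' C' D' f' h' k'" and x: "x \<in> C" "y \<in> D'" "k x = d y"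
  shows "x \<in> c ` C'"
proof -
  have "y \<in> h' ` B' \<union> k' ` C'"
    using top x(2) unfolding set_pushout_def by auto
  then show ?thesis
  proof
    assume "y \<in> k' ` C'"
    then obtain z where z: "z \<in> C'" "y = k' z"
      by blast
    then have "k x = k (c z)" "c z \<in> C"
      using x faces(4) maps(11) by auto
    then show ?thesis
      using inj_onD[OF bottom_parts(1)] x(1) z(1) by blast
  next
    assume "y \<in> h' ` B'"
    then obtain z where z: "z \<in> B'" "y = h' z"
      by blast
    then have kx: "k x = h (b z)" and bz: "b z \<in> B"
      using x faces(3) maps(10) by auto
    have "b z \<in> f ` A"
      using bottom_parts(3) kx bz x(1) by blast
    then obtain a' where a': "a' \<in> A'" "z = f' a'"
      using back_parts(1) z(1) by blast
    moreover have "a a' \<in> A"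
      using a'(1) maps(9) by blast
    ultimately have "k x = k (g (a a'))" "g (a a') \<in> C"
      using kx faces(1) bottom(2) maps(2) by auto
    then have "x = c (g' a')"
      using inj_onD[OF bottom_parts(1)] x(1) faces(2) a'(1) by auto
    then show ?thesis
      using a'(1) maps(6) by blast
  qed
qed

lemma in_image_b_if_top_pushout:
  assumes top: "set_pushout A' B' C' D' f' h' k'" and x: "x \<in> B" "y \<in> D'" "h x = d y"
  shows "x \<in> b ` B'"
proof (cases "x \<in> f ` A")
  case True
  then obtain a0 where a0: "a0 \<in> A" "x = f a0"
    by blast
  then have "g a0 \<in> c ` C'"
    using in_image_c_if_top_pushout[OF top _ x(2)] bottom(2) maps(2) x(3) by auto
  then obtain a' where "a' \<in> A'" "a0 = a a'"
    using back_parts(2) a0(1) by blast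
  then show ?thesis
    using a0(2) faces(1) maps(5) by (metis image_eqI image_subset_iff)
next
  case False
  then have hx: "h x \<in> h ` (B - f ` A)"
    using x(1) by blast
  have "y \<in> h' ` B' \<union> k' ` C'"
    using top x(2) unfolding set_pushout_def by auto
  then show ?thesis
  proof
    assume "y \<in> k' ` C'"
    then have "h x \<in> k ` C"
      using x(3) faces(4) maps(11) by auto
    then show ?thesis
      using hx bottom_parts(3) by blast
  next
    assume "y \<in> h' ` B'"
    then obtain z where z: "z \<in> B'" "y = h' z"
      by blast
    then have hz: "h x = h (b z)" and bz: "b z \<in> B"
      using x(3) faces(3) maps(10) by auto
    have "b z \<notin> f ` A"
    proof
      assume "b z \<in> f ` A"
      then have "h x \<in> k ` C"
        using hz bottom(2) maps(2) by auto
      then show False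
        using hx bottom_parts(3) by blast
    qed
    then have "x = b z"
      using inj_onD[OF bottom_parts(2) hz] x(1) False bz by blast
    then show ?thesis
      using z(1) by blast
  qed
qed

lemma front_pullbacks_if_top_pushout:
  assumes "set_pushout A' B' C' D' f' h' k'"
  shows "set_pullback B' B D' b h d" "set_pullback C' C D' c k d"
  unfolding set_pullback_def
  using vertical in_image_b_if_top_pushout[OF assms] in_image_c_if_top_pushout[OF assms] by auto

lemma top_injective_and_disjoint:
  "inj_on k' C'" "inj_on h' (B' - f' ` A')" "h' ` (B' - f' ` A') \<inter> k' ` C' = {}"
proof -
  have outside: "b z \<in> B - f ` A" if "z \<in> B' - f' ` A'" for z
    using that back_parts(1) maps(10) by blast
  have "inj_on (k \<circ> c) C'"
    using bottom_parts(1) vertical(2) maps(11) by (auto intro: comp_inj_on inj_on_subset)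
  then have "inj_on (d \<circ> k') C'"
    using faces(4) by (simp add: inj_on_def)
  then show "inj_on k' C'"
    by (rule inj_on_imageI2)
  show "inj_on h' (B' - f' ` A')"
  proof (rule inj_onI)
    fix x y assume xy: "x \<in> B' - f' ` A'" "y \<in> B' - f' ` A'" "h' x = h' y"
    then have "h (b x) = h (b y)"
      using faces(3) by (metis DiffD1)
    then have "b x = b y"
      using inj_onD[OF bottom_parts(2)] outside xy(1,2) by blast
    then show "x = y"
      using inj_onD[OF vertical(1)] xy(1,2) by blast
  qed
  have False if "x \<in> B' - f' ` A'" "y \<in> C'" "h' x = k' y" for x y
  proof -
    have "h (b x) = k (c y)"
      using that faces(3,4) by (metis DiffD1)
    then show False
      using bottom_parts(3) outside[OF that(1)] maps(11) that(2) by blast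
  qed
  then show "h' ` (B' - f' ` A') \<inter> k' ` C' = {}"
    by blast
qed

lemma top_pushout_if_front_pullbacks:
  assumes front: "set_pullback B' B D' b h d" "set_pullback C' C D' c k d"
  shows "set_pushout A' B' C' D' f' h' k'"
proof -
  have "D' \<subseteq> h' ` B' \<union> k' ` C'"
  proof
    fix y assume y: "y \<in> D'"
    then have "d y \<in> h ` B \<union> k ` C"
      using bottom_parts(4) maps(12) by blast
    then show "y \<in> h' ` B' \<union> k' ` C'"
    proof
      assume "d y \<in> h ` B"
      then obtain x where x: "x \<in> B" "d y = h x"
        by blast
      moreover have "h x \<in> d ` D'"
        using x(2) y by (metis image_eqI)
      ultimately obtain z where z: "z \<in> B'" "x = b z"
        using front(1) unfolding set_pullback_def by blast
      then have "y = h' z"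
        using x(2) faces(3) inj_onD[OF vertical(3)] y maps(7) by (metis image_subset_iff)
      then show ?thesis
        using z(1) by blast
    next
      assume "d y \<in> k ` C"
      then obtain x where x: "x \<in> C" "d y = k x"
        by blast
      moreover have "k x \<in> d ` D'"
        using x(2) y by (metis image_eqI)
      ultimately obtain z where z: "z \<in> C'" "x = c z"
        using front(2) unfolding set_pullback_def by blast
      then have "y = k' z"
        using x(2) faces(4) inj_onD[OF vertical(3)] y maps(8) by (metis image_subset_iff)
      then show ?thesis
        using z(1) by blast
    qed
  qed
  then show ?thesis
    unfolding set_pushout_def using top_injective_and_disjoint maps(7,8) by blast
qed

lemma top_pushout_iff_front_pullbacks:
  "set_pushout A' B' C' D' f' h' k' \<longleftrightarrow> set_pullback B' B D' b h d \<and> set_pullback C' C D' c k d"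
  using front_pullbacks_if_top_pushout top_pushout_if_front_pullbacks by blast

end

lemma pushout_M_VK:
  assumes po: "pushout A B C D f g h k" and fM: "Mm A B f"
  shows "M_VK A B C D f g h k"
  unfolding M_VK_def
proof (intro allI impI, elim conjE)
  fix A' B' C' D' f' g' h' k' a b c d
  assume top: "comm_sq A' B' C' D' f' g' h' k'" and a: "a \<in> hom A' A"
    and bM: "Mm B' B b" and cM: "Mm C' C c" and dM: "Mm D' D d"
    and e1: "cmp A' b f' = cmp A' f a" and e2: "cmp A' c g' = cmp A' g a"
    and e3: "cmp B' d h' = cmp B' h b" and e4: "cmp C' d k' = cmp C' k c"
    and pb1: "pullback A' B' A B f' a b f" and pb2: "pullback A' C' A C g' a c g"
  have f: "f \<in> hom A B" and g: "g \<in> hom A C" and h: "h \<in> hom B D" and k: "k \<in> hom C D"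
    and hk: "cmp A h f = cmp A k g"
    using po unfolding pushout_def comm_sq_def by auto
  have f': "f' \<in> hom A' B'" and g': "g' \<in> hom A' C'" and h': "h' \<in> hom B' D'" and k': "k' \<in> hom C' D'"
    using top unfolding comm_sq_def by auto
  have b: "b \<in> hom B' B" and c: "c \<in> hom C' C" and d: "d \<in> hom D' D"
    using bM cM dM by (simp_all add: Mm_def)
  have top_iff: "pushout A' B' C' D' f' g' h' k' \<longleftrightarrow> componentwise_pushout A' B' C' D' f' h' k'"
    using pushout_iff_componentwise[OF top Mm_pullback_stable[OF pb1 fM]] .
  have front1: "pullback B' D' B D h' b d h \<longleftrightarrow> componentwise_pullback B' B D' b h d"
    using pullback_iff_componentwise[of B' B D' D b h' h d] dM b h' h d e3
    by (auto simp: comm_sq_def dest: pullback_swap)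
  have front2: "pullback C' D' C D k' c d k \<longleftrightarrow> componentwise_pullback C' C D' c k d"
    using pullback_iff_componentwise[of C' C D' D c k' k d] dM c k' k d e4
    by (auto simp: comm_sq_def dest: pullback_swap)
  note bot = pushout_componentwise[OF po fM, unfolded componentwise_pushout_def]
  note back1 = pullback_componentwise[OF pb1 fM, unfolded componentwise_pullback_def]
  note back2 = pullback_componentwise[OF pullback_swap[OF pb2] cM, unfolded componentwise_pullback_def]
  interpret E: set_cube "gE A" "gE B" "gE C" "gE D" "gE A'" "gE B'" "gE C'" "gE D'"
    "fst f" "fst g" "fst h" "fst k" "fst f'" "fst g'" "fst h'" "fst k'" "fst a" "fst b" "fst c" "fst d"
    using bot back1 back2 cmp_eqD(1)[OF hk] cmp_eqD(1)[OF e1] cmp_eqD(1)[OF e2] cmp_eqD(1)[OF e3]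
      cmp_eqD(1)[OF e4] homD(6)[OF f] homD(6)[OF g] homD(6)[OF h] homD(6)[OF k] homD(6)[OF f']
      homD(6)[OF g'] homD(6)[OF h'] homD(6)[OF k'] homD(6)[OF a] homD(6)[OF b] homD(6)[OF c]
      homD(6)[OF d] MmD(2)[OF bM] MmD(2)[OF cM] MmD(2)[OF dM]
    by unfold_locales simp_all
  interpret V: set_cube "gV A" "gV B" "gV C" "gV D" "gV A'" "gV B'" "gV C'" "gV D'"
    "snd f" "snd g" "snd h" "snd k" "snd f'" "snd g'" "snd h'" "snd k'" "snd a" "snd b" "snd c" "snd d"
    using bot back1 back2 cmp_eqD(2)[OF hk] cmp_eqD(2)[OF e1] cmp_eqD(2)[OF e2] cmp_eqD(2)[OF e3]
      cmp_eqD(2)[OF e4] homD(7)[OF f] homD(7)[OF g] homD(7)[OF h] homD(7)[OF k] homD(7)[OF f']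
      homD(7)[OF g'] homD(7)[OF h'] homD(7)[OF k'] homD(7)[OF a] homD(7)[OF b] homD(7)[OF c]
      homD(7)[OF d] MmD(3)[OF bM] MmD(3)[OF cM] MmD(3)[OF dM]
    by unfold_locales simp_all
  show "pushout A' B' C' D' f' g' h' k' \<longleftrightarrow> pullback B' D' B D h' b d h \<and> pullback C' D' C D k' c d k"
    unfolding top_iff front1 front2 componentwise_pushout_def componentwise_pullback_def
    using E.top_pushout_iff_front_pullbacks V.top_pushout_iff_front_pullbacks by blast
qed

theorem M_adhesive_uGraph: "M_adhesive"
  unfolding M_adhesive_def
  by (intro conjI allI impI; (elim conjE)?)
    (meson pushout_exists pullback_exists iso_Mm Mm_cmp Mm_pushout_stable Mm_pullback_stable pushout_M_VK)+

section \<open>Subobjects, epimorphisms and final pullback complements\<close>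

lemma hom_image_factorization:
  assumes f: "f \<in> hom A B"
  shows "f \<in> hom A (subgraph B (fst f ` gE A) (snd f ` gV A))"
    "cmp A (inclusion (fst f ` gE A) (snd f ` gV A)) f = f"
  using hom_into_subgraph[OF f image_subgraph_carriers[OF f]] cmp_inclusion[OF f] by simp_all

theorem finitary_uGraph: "finitary"
  unfolding finitary_def
proof (intro allI impI)
  fix X assume X: "ug X"
  define S where "S = (\<lambda>(E, V). (subgraph X E V, inclusion E V)) ` {(E, V). subgraph_carriers X E V}"
  have "{(E, V). subgraph_carriers X E V} \<subseteq> Pow (gE X) \<times> Pow (gV X)"
    unfolding subgraph_carriers_def by auto
  then have "finite S"
    unfolding S_def using ugD(1,2)[OF X] by (meson finite_Pow_iff finite_SigmaI finite_subset finite_imageI)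
  moreover have "\<forall>(Y, m)\<in>S. Mm Y X m"
    unfolding S_def using Mm_inclusion[OF X] by auto
  moreover have "\<exists>(Y', m')\<in>S. \<exists>i. iso Y Y' i \<and> cmp Y m' i = m" if m: "Mm Y X m" for Y m
  proof -
    let ?E = "fst m ` gE Y" and ?V = "snd m ` gV Y"
    note mY = hom_image_factorization[OF MmD(1)[OF m]]
    have "iso Y (subgraph X ?E ?V) m"
      using m unfolding iso_iff_bij[OF mY(1)] by (simp add: Mm_def subgraph_def bij_betw_def)
    moreover have "(subgraph X ?E ?V, inclusion ?E ?V) \<in> S"
      unfolding S_def using image_subgraph_carriers[OF MmD(1)[OF m]] by (auto intro!: image_eqI[where x="(?E, ?V)"])
    ultimately show ?thesis
      using mY(2) by blast
  qed
  ultimately show "\<exists>S. finite S \<and> (\<forall>(Y, m)\<in>S. Mm Y X m) \<and>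
      (\<forall>Y m. Mm Y X m \<longrightarrow> (\<exists>(Y', m')\<in>S. \<exists>i. iso Y Y' i \<and> cmp Y m' i = m))"
    by blast
qed

theorem M_initial_uGraph: "M_initial"
  unfolding M_initial_def
proof (intro exI conjI allI impI)
  let ?I = "({}, {}, \<lambda>_. undefined) :: ugraph"
  show I: "ug ?I"
    unfolding ug_def by simp
  fix X assume "ug X"
  then show "\<exists>!m. Mm ?I X m"
    using I unfolding Mm_def hom_iff
    by (intro ex1I[of _ "(\<lambda>_. undefined, \<lambda>_. undefined)"]) (auto simp: prod_eq_iff)
qed

lemma set_pushout_mediator_inj:
  assumes po: "set_pushout A B C D m1 n1 n2" and pb: "set_pullback A B C m1 e1 e2"
    and e: "inj_on e1 B" "inj_on e2 C" "\<forall>a\<in>A. e1 (m1 a) = e2 (m2 a)" "m2 ` A \<subseteq> C"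
    and n: "\<forall>a\<in>A. n1 (m1 a) = n2 (m2 a)"
    and u: "\<forall>b\<in>B. u (n1 b) = e1 b" "\<forall>c\<in>C. u (n2 c) = e2 c"
  shows "inj_on u D"
proof (rule inj_onI)
  have glue: "n1 b = n2 c" if bc: "b \<in> B" "c \<in> C" "e1 b = e2 c" for b c
  proof -
    obtain a where a: "a \<in> A" "b = m1 a"
      using pb bc unfolding set_pullback_def by blast
    then have "m2 a = c"
      using inj_onD[OF e(2)] e(3,4) bc by auto
    then show ?thesis
      using a n by auto
  qed
  fix x y assume "x \<in> D" "y \<in> D" and uxy: "u x = u y"
  then consider b b' where "b \<in> B" "b' \<in> B" "x = n1 b" "y = n1 b'"
    | b c where "b \<in> B" "c \<in> C" "x = n1 b" "y = n2 c"
    | c b where "c \<in> C" "b \<in> B" "x = n2 c" "y = n1 b"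
    | c c' where "c \<in> C" "c' \<in> C" "x = n2 c" "y = n2 c'"
    using po unfolding set_pushout_def by blast
  then show "x = y"
  proof cases
    case (1 b b')
    then show ?thesis
      using uxy u inj_onD[OF e(1)] by metis
  next
    case (2 b c)
    then show ?thesis
      using uxy u glue by metis
  next
    case (3 c b)
    then show ?thesis
      using uxy u glue by metis
  next
    case (4 c c')
    then show ?thesis
      using uxy u inj_onD[OF e(2)] by metis
  qed
qed

theorem M_effective_unions_uGraph: "M_effective_unions"
  unfolding M_effective_unions_def
proof (intro allI impI, elim conjE)
  fix A B C D E m1 m2 n1 n2 e1 e2 u
  assume m1: "Mm A B m1" and m2: "Mm A C m2" and po: "pushout A B C D m1 m2 n1 n2"
    and e1: "Mm B E e1" and e2: "Mm C E e2" and pb: "pullback A B C E m1 m2 e1 e2"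
    and u: "u \<in> hom D E" and un1: "cmp B u n1 = e1" and un2: "cmp C u n2 = e2"
    and "Mm B D n1" "Mm C D n2"
  have n1: "n1 \<in> hom B D" and n2: "n2 \<in> hom C D" and n: "cmp A n1 m1 = cmp A n2 m2"
    using po unfolding pushout_def comm_sq_def by auto
  have e: "cmp A e1 m1 = cmp A e2 m2"
    using pb unfolding pullback_def comm_sq_def by auto
  note un = un1[unfolded cmp_eq_hom_iff[OF n1 MmD(1)[OF e1]]] un2[unfolded cmp_eq_hom_iff[OF n2 MmD(1)[OF e2]]]
  note po' = pushout_componentwise[OF po m1, unfolded componentwise_pushout_def]
  note pb' = pullback_componentwise[OF pb e2, unfolded componentwise_pullback_def]
  have "inj_on (fst u) (gE D)" "inj_on (snd u) (gV D)"
    using set_pushout_mediator_inj[OF po'[THEN conjunct1] pb'[THEN conjunct1] MmD(2)[OF e1] MmD(2)[OF e2]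
        _ homD(6)[OF MmD(1)[OF m2]]]
      set_pushout_mediator_inj[OF po'[THEN conjunct2] pb'[THEN conjunct2] MmD(3)[OF e1] MmD(3)[OF e2]
        _ homD(7)[OF MmD(1)[OF m2]]]
      cmp_eqD[OF n] cmp_eqD[OF e] un by blast+
  then show "Mm D E u"
    unfolding Mm_def using u by blast
qed

lemma epi_if_surjective:
  assumes e: "e \<in> hom A K" "fst e ` gE A = gE K" "snd e ` gV A = gV K"
  shows "epi A K e"
  unfolding epi_def
proof (intro conjI allI ballI impI)
  fix X x y assume x: "x \<in> hom K X" and y: "y \<in> hom K X" and xy: "cmp A x e = cmp A y e"
  show "x = y"
  proof (rule hom_eqI[OF x y])
    show "fst x z = fst y z" if z: "z \<in> gE K" for z
    proof -
      obtain w where "w \<in> gE A" "z = fst e w"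
        using z unfolding e(2)[symmetric] by blast
      then show ?thesis
        using cmp_eqD(1)[OF xy] by simp
    qed
    show "snd x z = snd y z" if z: "z \<in> gV K" for z
    proof -
      obtain w where "w \<in> gV A" "z = snd e w"
        using z unfolding e(3)[symmetric] by blast
      then show ?thesis
        using cmp_eqD(2)[OF xy] by simp
    qed
  qed
qed (fact e(1))

text \<open>Two parallel maps into this graph that agree after an epimorphism \<open>e : A \<rightarrow> K\<close>
  separate any vertex or edge of \<open>K\<close> outside the image of \<open>e\<close>: the constant map onto the
  loop \<open>0\<close>, and a map sending the missing vertex to \<open>1\<close> or the missing edge to the loop \<open>3\<close>.\<close>

definition probe :: ugraph where
  "probe = ({0, 1, 2, 3}, {0, 1},
     restrict (\<lambda>n. if n = 1 then {1} else if n = 2 then {0, 1} else {0}) {0, 1, 2, 3})"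

lemma image_restrict_const: "S \<subseteq> V \<Longrightarrow> S \<noteq> {} \<Longrightarrow> restrict (\<lambda>_. c) V ` S = {c}"
  by auto

lemma ug_probe: "ug probe"
  unfolding ug_def probe_def P12_def by (auto simp: PiE_iff)

lemma hom_to_probeI:
  assumes K: "ug K" and u: "fst u \<in> gE K \<rightarrow>\<^sub>E {0, 1, 2, 3}" "snd u \<in> gV K \<rightarrow>\<^sub>E {0, 1}"
    and inc: "\<And>x. x \<in> gE K \<Longrightarrow> gi probe (fst u x) = snd u ` gi K x"
  shows "u \<in> hom K probe"
  unfolding hom_iff using K ug_probe u inc by (simp add: probe_def)

lemma hom_to_probe_const:
  assumes K: "ug K"
  shows "(restrict (\<lambda>_. 0) (gE K), restrict (\<lambda>_. 0) (gV K)) \<in> hom K probe"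
proof (rule hom_to_probeI[OF K])
  fix x assume x: "x \<in> gE K"
  have "gi probe (restrict (\<lambda>_. 0) (gE K) x) = {0}"
    using x by (simp add: probe_def)
  then show "gi probe (fst (restrict (\<lambda>_. 0) (gE K), restrict (\<lambda>_. 0) (gV K)) x) =
      snd (restrict (\<lambda>_. 0) (gE K), restrict (\<lambda>_. 0) (gV K)) ` gi K x"
    by (simp only: fst_conv snd_conv image_restrict_const[OF ugD(5,6)[OF K x]])
qed auto

lemma hom_to_probe_edge:
  assumes K: "ug K"
  shows "(restrict (\<lambda>x. if x = e then 3 else 0) (gE K), restrict (\<lambda>_. 0) (gV K)) \<in> hom K probe"
proof (rule hom_to_probeI[OF K])
  fix x assume x: "x \<in> gE K"
  have "gi probe (restrict (\<lambda>x. if x = e then 3 else 0) (gE K) x) = {0}"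
    using x by (simp add: probe_def)
  then show "gi probe (fst (restrict (\<lambda>x. if x = e then 3 else 0) (gE K), restrict (\<lambda>_. 0) (gV K)) x) =
      snd (restrict (\<lambda>x. if x = e then 3 else 0) (gE K), restrict (\<lambda>_. 0) (gV K)) ` gi K x"
    by (simp only: fst_conv snd_conv image_restrict_const[OF ugD(5,6)[OF K x]])
qed auto

lemma hom_to_probe_vertex:
  assumes K: "ug K"
  shows "(restrict (\<lambda>x. if v \<in> gi K x then if gi K x = {v} then 1 else 2 else 0) (gE K),
      restrict (\<lambda>w. if w = v then 1 else 0) (gV K)) \<in> hom K probe"
    (is "(restrict ?sE (gE K), restrict ?sV (gV K)) \<in> _")
proof (rule hom_to_probeI[OF K])
  fix x assume x: "x \<in> gE K"
  let ?P = "if v \<in> gi K x then if gi K x = {v} then {1} else {0, 1} else {0 :: nat}"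
  have "restrict ?sV (gV K) ` gi K x = ?sV ` gi K x"
    using ugD(5)[OF K x] by (force simp: image_iff)
  also have "\<dots> = ?P"
    using ugD(6)[OF K x] by (auto simp: image_iff)
  finally have "restrict ?sV (gV K) ` gi K x = ?P" .
  moreover have "gi probe (restrict ?sE (gE K) x) = ?P"
    using x by (simp add: probe_def)
  ultimately show "gi probe (fst (restrict ?sE (gE K), restrict ?sV (gV K)) x) =
      snd (restrict ?sE (gE K), restrict ?sV (gV K)) ` gi K x"
    by (simp only: fst_conv snd_conv)
qed auto

lemma epiD:
  "epi A K e \<Longrightarrow> x \<in> hom K X \<Longrightarrow> y \<in> hom K X \<Longrightarrow> cmp A x e = cmp A y e \<Longrightarrow> x = y"
  unfolding epi_def by blast

lemma epi_surjective:
  assumes ep: "epi A K e"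
  shows "fst e ` gE A = gE K" "snd e ` gV A = gV K"
proof -
  have e: "e \<in> hom A K"
    using ep unfolding epi_def by blast
  have K: "ug K" and A: "ug A"
    using homD(1,2)[OF e] by auto
  let ?c = "(restrict (\<lambda>_. 0) (gE K), restrict (\<lambda>_. 0) (gV K)) :: umor"
  show "fst e ` gE A = gE K"
  proof (rule ccontr)
    assume "fst e ` gE A \<noteq> gE K"
    then obtain z where z: "z \<in> gE K" "z \<notin> fst e ` gE A"
      using homD(6)[OF e] by blast
    let ?s = "(restrict (\<lambda>x. if x = z then 3 else 0) (gE K), restrict (\<lambda>_. 0) (gV K)) :: umor"
    have "cmp A ?c e = cmp A ?s e"
      unfolding cmp_eq_iff using z(2) homD(6,7)[OF e] by auto
    then have "fst ?c z = fst ?s z"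
      using epiD[OF ep hom_to_probe_const[OF K] hom_to_probe_edge[OF K]] by simp
    then show False
      using z(1) by simp
  qed
  show "snd e ` gV A = gV K"
  proof (rule ccontr)
    assume "snd e ` gV A \<noteq> gV K"
    then obtain v where v: "v \<in> gV K" "v \<notin> snd e ` gV A"
      using homD(7)[OF e] by blast
    let ?s = "(restrict (\<lambda>x. if v \<in> gi K x then if gi K x = {v} then 1 else 2 else 0) (gE K),
      restrict (\<lambda>w. if w = v then 1 else 0) (gV K)) :: umor"
    have "v \<notin> gi K (fst e x)" if "x \<in> gE A" for x
      using v(2) homD(5)[OF e that] ugD(5)[OF A that] by auto
    then have "cmp A ?c e = cmp A ?s e"
      unfolding cmp_eq_iff using v(2) homD(6,7)[OF e] by auto
    then have "snd ?c v = snd ?s v"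
      using epiD[OF ep hom_to_probe_const[OF K] hom_to_probe_vertex[OF K]] by simp
    then show False
      using v(1) by simp
  qed
qed

lemma bij_through_injective_factors:
  assumes e: "e ` A = K" "e' ` A = K'" and m: "inj_on m K" "inj_on m' K'"
    and eq: "\<forall>x\<in>A. m (e x) = m' (e' x)"
  shows "bij_betw (inv_into K' m' \<circ> m) K K'" "\<forall>x\<in>A. inv_into K' m' (m (e x)) = e' x"
    "\<forall>z\<in>K. m' (inv_into K' m' (m z)) = m z"
proof -
  have mm: "m ` K = m' ` K'"
    unfolding e[symmetric] image_image using eq by (intro image_cong) auto
  show "bij_betw (inv_into K' m' \<circ> m) K K'"
    using bij_betw_trans[OF inj_on_imp_bij_betw[OF m(1), unfolded mm]
        bij_betw_inv_into[OF inj_on_imp_bij_betw[OF m(2)]]] .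
  show "\<forall>x\<in>A. inv_into K' m' (m (e x)) = e' x"
    using eq e(2) m(2) by auto
  show "\<forall>z\<in>K. m' (inv_into K' m' (m z)) = m z"
  proof
    fix z assume "z \<in> K"
    then have "m z \<in> m' ` K'"
      unfolding mm[symmetric] by blast
    then show "m' (inv_into K' m' (m z)) = m z"
      by (rule f_inv_into_f)
  qed
qed

lemma epi_hom: "epi A K e \<Longrightarrow> e \<in> hom A K"
  unfolding epi_def by (rule conjunct1)

theorem epi_M_factorization_uGraph: "epi_M_factorization"
  unfolding epi_M_factorization_def
proof (intro allI impI conjI)
  fix A B f assume f: "f \<in> hom A B"
  let ?E = "fst f ` gE A" and ?V = "snd f ` gV A"
  note fact = hom_image_factorization[OF f]
  have "epi A (subgraph B ?E ?V) f"
    by (rule epi_if_surjective[OF fact(1)]) (simp_all add: subgraph_def)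
  moreover have "Mm (subgraph B ?E ?V) B (inclusion ?E ?V)"
    using Mm_inclusion[OF homD(2)[OF f] image_subgraph_carriers[OF f]] .
  ultimately show "\<exists>K e m. epi A K e \<and> Mm K B m \<and> cmp A m e = f"
    using fact(2) by blast
next
  fix A B f K e m K' e' m'
  assume "epi A K e \<and> Mm K B m \<and> cmp A m e = f \<and> epi A K' e' \<and> Mm K' B m' \<and> cmp A m' e' = f"
  then have ep: "epi A K e" and m: "Mm K B m" and ep': "epi A K' e'" and m': "Mm K' B m'"
    and eq: "cmp A m e = cmp A m' e'"
    by auto
  have e: "e \<in> hom A K" and e': "e' \<in> hom A K'"
    using ep ep' by (simp_all add: epi_hom)
  note eqEV = eq[unfolded cmp_eq_iff]
  note fE = bij_through_injective_factors[OF epi_surjective(1)[OF ep] epi_surjective(1)[OF ep']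
      MmD(2)[OF m] MmD(2)[OF m'] eqEV[THEN conjunct1]]
  note fV = bij_through_injective_factors[OF epi_surjective(2)[OF ep] epi_surjective(2)[OF ep']
      MmD(3)[OF m] MmD(3)[OF m'] eqEV[THEN conjunct2]]
  define i where "i = (restrict (inv_into (gE K') (fst m') \<circ> fst m) (gE K),
    restrict (inv_into (gV K') (snd m') \<circ> snd m) (gV K))"
  have bij: "bij_betw (fst i) (gE K) (gE K')" "bij_betw (snd i) (gV K) (gV K')"
    by (rule bij_betw_cong[THEN iffD1, OF _ fE(1)], simp add: i_def,
        rule bij_betw_cong[THEN iffD1, OF _ fV(1)], simp add: i_def)
  have "fst i \<in> gE K \<rightarrow>\<^sub>E gE K'" "snd i \<in> gV K \<rightarrow>\<^sub>E gV K'"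
    using bij_betw_imp_funcset[OF bij(1)] bij_betw_imp_funcset[OF bij(2)] by (simp_all add: i_def PiE_def)
  then have i: "i \<in> hom K K'"
    by (rule hom_lift_Mm[OF m' MmD(1)[OF m]]) (use fE(3) fV(3) in \<open>simp_all add: i_def\<close>)
  have "iso K K' i"
    using bij unfolding iso_iff_bij[OF i] by simp
  moreover have "cmp A i e = e'"
    unfolding cmp_eq_hom_iff[OF e e'] using fE(2) fV(2) homD(6,7)[OF e] by (auto simp: i_def)
  moreover have "cmp K m' i = m"
    unfolding cmp_eq_hom_iff[OF i MmD(1)[OF m]] using fE(3) fV(3) by (simp add: i_def)
  ultimately show "\<exists>i. iso K K' i \<and> cmp A i e = e' \<and> cmp K m' i = m"
    by blast
qed

definition fpc_verts :: "ugraph \<Rightarrow> ugraph \<Rightarrow> ugraph \<Rightarrow> umor \<Rightarrow> umor \<Rightarrow> nat set" where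
  "fpc_verts A B D a b = gV D - snd b ` (gV B - snd a ` gV A)"

definition fpc_edges :: "ugraph \<Rightarrow> ugraph \<Rightarrow> ugraph \<Rightarrow> umor \<Rightarrow> umor \<Rightarrow> nat set" where
  "fpc_edges A B D a b =
     {e \<in> gE D - fst b ` (gE B - fst a ` gE A). gi D e \<subseteq> fpc_verts A B D a b}"

definition fpc_graph :: "ugraph \<Rightarrow> ugraph \<Rightarrow> ugraph \<Rightarrow> umor \<Rightarrow> umor \<Rightarrow> ugraph" where
  "fpc_graph A B D a b = subgraph D (fpc_edges A B D a b) (fpc_verts A B D a b)"

definition fpc_incl :: "ugraph \<Rightarrow> ugraph \<Rightarrow> ugraph \<Rightarrow> umor \<Rightarrow> umor \<Rightarrow> umor" where
  "fpc_incl A B D a b = inclusion (fpc_edges A B D a b) (fpc_verts A B D a b)"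

lemma fpc_carriers: "subgraph_carriers D (fpc_edges A B D a b) (fpc_verts A B D a b)"
  unfolding subgraph_carriers_def fpc_edges_def fpc_verts_def by auto

lemma Mm_fpc_incl: "ug D \<Longrightarrow> Mm (fpc_graph A B D a b) D (fpc_incl A B D a b)"
  unfolding fpc_graph_def fpc_incl_def using Mm_inclusion fpc_carriers by blast

lemma hom_into_fpc_graph:
  assumes r: "r \<in> hom C D"
    and avoidE: "fst r ` gE C \<inter> fst b ` (gE B - fst a ` gE A) = {}"
    and avoidV: "snd r ` gV C \<inter> snd b ` (gV B - snd a ` gV A) = {}"
  shows "r \<in> hom C (fpc_graph A B D a b)" "cmp C (fpc_incl A B D a b) r = r"
proof -
  have V: "snd r ` gV C \<subseteq> fpc_verts A B D a b"
    using avoidV homD(7)[OF r] unfolding fpc_verts_def by blast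
  have "gi D (fst r e) \<subseteq> fpc_verts A B D a b" if "e \<in> gE C" for e
    using homD(5)[OF r that] ugD(5)[OF homD(1)[OF r] that] V by auto
  then have E: "fst r ` gE C \<subseteq> fpc_edges A B D a b"
    using avoidE homD(6)[OF r] unfolding fpc_edges_def by blast
  show "r \<in> hom C (fpc_graph A B D a b)" "cmp C (fpc_incl A B D a b) r = r"
    using hom_into_subgraph[OF r fpc_carriers E V] cmp_inclusion[OF r E V]
    by (simp_all add: fpc_graph_def fpc_incl_def)
qed

lemma image_avoids_deleted:
  assumes b: "inj_on b B" and a: "a ` A \<subseteq> B" and p: "p ` A' \<subseteq> A"
    and pb: "\<forall>y\<in>C'. r y \<in> b ` B \<longrightarrow> y \<in> q ` A'" and sq: "\<forall>x\<in>A'. b (a (p x)) = r (q x)"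
  shows "r ` C' \<inter> b ` (B - a ` A) = {}"
proof -
  have False if y: "y \<in> C'" and w: "w \<in> B" "w \<notin> a ` A" "r y = b w" for y w
  proof -
    obtain x where x: "x \<in> A'" "y = q x"
      using pb y w(1,3) by blast
    then have "b w = b (a (p x))"
      using w(3) sq by simp
    then have "w = a (p x)"
      using inj_onD[OF b] w(1) a p x(1) by blast
    then show False
      using w(2) p x(1) by blast
  qed
  then show ?thesis
    by blast
qed

lemma fpc_pullback:
  assumes a: "Mm A B a" and b: "Mm B D b"
  shows "pullback A B (fpc_graph A B D a b) D a (cmp A b a) b (fpc_incl A B D a b)"
proof -
  let ?C = "fpc_graph A B D a b" and ?c = "fpc_incl A B D a b" and ?d = "cmp A b a"
  have ah: "a \<in> hom A B" and bh: "b \<in> hom B D"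
    using MmD(1)[OF a] MmD(1)[OF b] .
  have d: "?d \<in> hom A D"
    using cmp_hom[OF ah bh] .
  have avoidE: "fst ?d ` gE A \<inter> fst b ` (gE B - fst a ` gE A) = {}"
    by (rule image_avoids_deleted[OF MmD(2)[OF b] homD(6)[OF ah], of id]) auto
  have avoidV: "snd ?d ` gV A \<inter> snd b ` (gV B - snd a ` gV A) = {}"
    by (rule image_avoids_deleted[OF MmD(3)[OF b] homD(7)[OF ah], of id]) auto
  note d' = hom_into_fpc_graph[OF d avoidE avoidV]
  have c: "Mm ?C D ?c"
    using Mm_fpc_incl[OF homD(2)[OF bh]] .
  have "comm_sq A B ?C D a ?d b ?c"
    unfolding comm_sq_def using ah d'(1) bh MmD(1)[OF c] d'(2) by simp
  moreover have "fst ?c ` gE ?C = fpc_edges A B D a b" "snd ?c ` gV ?C = fpc_verts A B D a b"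
    by (simp_all add: fpc_graph_def fpc_incl_def subgraph_def inclusion_def)
  then have "componentwise_pullback A B ?C a b ?c"
    using MmD(2,3)[OF a] unfolding componentwise_pullback_def set_pullback_def
    by (simp add: fpc_edges_def fpc_verts_def) blast
  ultimately show ?thesis
    by (rule pullbackI[OF _ c])
qed

lemma fpc_final:
  assumes a: "a \<in> hom A B" and b: "Mm B D b" and p: "p \<in> hom A' A" and r: "r \<in> hom C' D"
    and pb: "pullback A' B C' D (cmp A' a p) q b r"
  shows "\<exists>!s. s \<in> hom C' (fpc_graph A B D a b) \<and> cmp C' (fpc_incl A B D a b) s = r \<and>
      cmp A' s q = cmp A' (cmp A b a) p"
proof -
  have sq: "cmp A' b (cmp A' a p) = cmp A' r q"
    using pb unfolding pullback_def comm_sq_def by (elim conjE)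
  note qpb = pullback_componentwise[OF pullback_swap[OF pb] b, unfolded componentwise_pullback_def set_pullback_def]
  have avoidE: "fst r ` gE C' \<inter> fst b ` (gE B - fst a ` gE A) = {}"
    by (rule image_avoids_deleted[OF MmD(2)[OF b] homD(6)[OF a] homD(6)[OF p]])
      (use qpb cmp_eqD(1)[OF sq] homD(6)[OF p] in auto)
  have avoidV: "snd r ` gV C' \<inter> snd b ` (gV B - snd a ` gV A) = {}"
    by (rule image_avoids_deleted[OF MmD(3)[OF b] homD(7)[OF a] homD(7)[OF p]])
      (use qpb cmp_eqD(2)[OF sq] homD(7)[OF p] in auto)
  note rC = hom_into_fpc_graph(1)[OF r avoidE avoidV] and rc = hom_into_fpc_graph(2)[OF r avoidE avoidV]
  have rq: "cmp A' r q = cmp A' (cmp A b a) p"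
    using cmp_eqD[OF sq] homD(6,7)[OF p] unfolding cmp_eq_iff by auto
  show ?thesis
  proof (rule ex1I[of _ r])
    fix s assume s: "s \<in> hom C' (fpc_graph A B D a b) \<and> cmp C' (fpc_incl A B D a b) s = r \<and>
      cmp A' s q = cmp A' (cmp A b a) p"
    have "Mm (fpc_graph A B D a b) D (fpc_incl A B D a b)"
      by (rule Mm_fpc_incl[OF homD(2)[OF r]])
    then show "s = r"
      using Mm_cancel[of _ _ _ s C' r] s rC rc by simp
  qed (use rC rc rq in simp)
qed

theorem FPC_fpc_graph:
  assumes a: "Mm A B a" and b: "Mm B D b"
  shows "FPC A B (fpc_graph A B D a b) D a b (fpc_incl A B D a b) (cmp A b a)"
  unfolding FPC_def
  by (intro conjI allI impI fpc_pullback[OF a b]; elim conjE) (rule fpc_final[OF MmD(1)[OF a] b])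

lemma FPC_pullback: "FPC A B C D a b c d \<Longrightarrow> pullback A B C D a d b c"
  unfolding FPC_def by (elim conjE)

lemma FPC_universal:
  assumes "FPC A B C D a b c d" "p \<in> hom A' A" "r \<in> hom C' D" "pullback A' B C' D (cmp A' a p) q b r"
  shows "\<exists>!s. s \<in> hom C' C \<and> cmp C' c s = r \<and> cmp A' s q = cmp A' d p"
proof -
  have "\<forall>A' C' p q r. p \<in> hom A' A \<and> r \<in> hom C' D \<and> pullback A' B C' D (cmp A' a p) q b r \<longrightarrow>
      (\<exists>!s. s \<in> hom C' C \<and> cmp C' c s = r \<and> cmp A' s q = cmp A' d p)"
    using assms(1) unfolding FPC_def by (elim conjE)
  then show ?thesis
    using assms(2-4) by blast
qed

lemma FPC_endo_idm:
  assumes F: "FPC A B C D a b c d" and v: "v \<in> hom C C" "cmp C c v = c" "cmp A v d = d"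
  shows "v = idm C"
proof -
  have pb: "pullback A B C D a d b c"
    using FPC_pullback[OF F] .
  have a: "a \<in> hom A B" and d: "d \<in> hom A C" and c: "c \<in> hom C D"
    using pb unfolding pullback_def comm_sq_def by auto
  have "pullback A B C D (cmp A a (idm A)) d b c"
    using pb cmp_idm_right[OF a] by simp
  then have "\<exists>!s. s \<in> hom C C \<and> cmp C c s = c \<and> cmp A s d = cmp A d (idm A)"
    by (rule FPC_universal[OF F idm_hom[OF homD(1)[OF a]] c])
  moreover have "idm C \<in> hom C C" "cmp C c (idm C) = c" "cmp A (idm C) d = cmp A d (idm A)"
    using idm_hom[OF homD(1)[OF c]] cmp_idm_right[OF c] cmp_idm_left[OF d] cmp_idm_right[OF d] by auto
  ultimately show ?thesis
    using v cmp_idm_right[OF d] by metis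
qed

lemma FPC_unique_iso:
  assumes F: "FPC A B C D a b c d" and F': "FPC A B C' D a b c' d'"
  obtains w where "iso C C' w" "cmp C c' w = c"
proof -
  have pb: "pullback A B C D a d b c" and pb': "pullback A B C' D a d' b c'"
    using FPC_pullback[OF F] FPC_pullback[OF F'] .
  have a: "a \<in> hom A B" and d: "d \<in> hom A C" and c: "c \<in> hom C D"
    and d': "d' \<in> hom A C'" and c': "c' \<in> hom C' D"
    using pb pb' unfolding pullback_def comm_sq_def by auto
  have idA: "idm A \<in> hom A A"
    using idm_hom[OF homD(1)[OF a]] .
  have "pullback A B C D (cmp A a (idm A)) d b c" "pullback A B C' D (cmp A a (idm A)) d' b c'"
    using pb pb' cmp_idm_right[OF a] by simp_all
  then obtain w u where w: "w \<in> hom C C'" "cmp C c' w = c" "cmp A w d = cmp A d' (idm A)"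
    and u: "u \<in> hom C' C" "cmp C' c u = c'" "cmp A u d' = cmp A d (idm A)"
    using FPC_universal[OF F' idA c] FPC_universal[OF F idA c'] by meson
  have "cmp C u w = idm C"
    using cmp_hom[OF w(1) u(1)] w u cmp_assoc[OF w(1), of c u] cmp_assoc[OF d, of u w]
      cmp_idm_right[OF d] cmp_idm_right[OF d']
    by (intro FPC_endo_idm[OF F]) simp_all
  moreover have "cmp C' w u = idm C'"
    using cmp_hom[OF u(1) w(1)] w u cmp_assoc[OF u(1), of c' w] cmp_assoc[OF d', of w u]
      cmp_idm_right[OF d] cmp_idm_right[OF d']
    by (intro FPC_endo_idm[OF F']) simp_all
  ultimately have "iso C C' w"
    unfolding iso_def using w(1) u(1) by blast
  with w(2) that show ?thesis
    by blast
qed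

theorem M_stable_under_FPC_uGraph: "M_stable_under_FPC"
  unfolding M_stable_under_FPC_def
proof (intro allI impI, elim conjE)
  fix A B C D a b c d
  assume a: "Mm A B a" and b: "Mm B D b" and F: "FPC A B C D a b c d"
  obtain w where w: "iso C (fpc_graph A B D a b) w" "cmp C (fpc_incl A B D a b) w = c"
    using FPC_unique_iso[OF F FPC_fpc_graph[OF a b]] .
  have "Mm C D c"
    using Mm_cmp[OF iso_Mm[OF w(1)] Mm_fpc_incl[OF homD(2)[OF MmD(1)[OF b]]]] w(2) by simp
  moreover have "Mm A C d"
    using Mm_pullback_stable[OF pullback_swap[OF FPC_pullback[OF F]] b] .
  ultimately show "Mm C D c \<and> Mm A C d" ..
qed

theorem FPCs_of_M_exist_uGraph: "FPCs_of_M_exist"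
  unfolding FPCs_of_M_exist_def using FPC_fpc_graph by blast

theorem mainTheorem1:
  shows "M_adhesive \<and> finitary \<and> M_initial \<and> M_effective_unions \<and> epi_M_factorization \<and>
         FPCs_of_M_exist \<and> M_stable_under_FPC"
  using M_adhesive_uGraph finitary_uGraph M_initial_uGraph M_effective_unions_uGraph
    epi_M_factorization_uGraph FPCs_of_M_exist_uGraph M_stable_under_FPC_uGraph by blast

end
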